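(* There is an isomorphism of graded superrings $Z_s(A_n)\cong R^{S_n}$, where $Z_s(A_n)=\{x\in A_n: xa=(-1)^{p(x)p(a)}ax \text{ for all homogeneous } a\in A_n\}$ is the supercenter and $R^{S_n}$ is the subsuperring of $S_n$-invariants of $R$.
   Context: $R=\mathbb{Z}[x_1,\dots,x_n]\otimes\bigwedge^\bullet(\omega_1,\dots,\omega_n)$ is supercommutative, $x_i$ even of degree $(2,0)$, $\omega_i$ odd of degree $(-2i,2)$; $p$ denotes parity. $S_n$ acts on $R$ by ring automorphisms with $s_i(x_j)=x_{s_i(j)}$ and $s_i(\omega_j)=\omega_j+\delta_{ij}(x_i-x_{i+1})\omega_{i+1}$. Demazure operators: $\partial_i(f)=(f-s_i(f))/(x_i-x_{i+1})$, $1\le i\le n-1$. $A_n$ is the bigraded $\mathbb{Z}$-superalgebra of operators on $R$ generated by the $\partial_i$ together with multiplication by elements of $R$. *)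

theory Defs
  imports Main
begin

text \<open>Concrete model of R = Z[x_1..x_n] (x) Lambda(omega_1..omega_n).
  A monomial x^a omega_S is a pair (a, S); omega_S is the ordered product
  omega_{j1} ... omega_{jk} with j1 < ... < jk.\<close>

type_synonym mon = "(nat \<Rightarrow> nat) \<times> nat set"
type_synonym elt = "mon \<Rightarrow> int"

definition valid_mon :: "nat \<Rightarrow> mon \<Rightarrow> bool" where
  "valid_mon n m \<longleftrightarrow> (\<forall>j. j \<notin> {1..n} \<longrightarrow> fst m j = 0) \<and> snd m \<subseteq> {1..n}"

definition supp :: "elt \<Rightarrow> mon set" where
  "supp c = {m. c m \<noteq> 0}"

definition Rn :: "nat \<Rightarrow> elt set" where
  "Rn n = {c. finite (supp c) \<and> (\<forall>m\<in>supp c. valid_mon n m)}"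

definition mono :: "mon \<Rightarrow> elt" where
  "mono m = (\<lambda>k. if k = m then 1 else 0)"

definition rzero :: elt where "rzero = (\<lambda>_. 0)"
definition rone :: elt where "rone = mono (\<lambda>_. 0, {})"
definition radd :: "elt \<Rightarrow> elt \<Rightarrow> elt" where "radd c d = (\<lambda>m. c m + d m)"
definition rneg :: "elt \<Rightarrow> elt" where "rneg c = (\<lambda>m. - c m)"

text \<open>Sign of omega_S * omega_T = wsign S T * omega_{S \<union> T} (for disjoint S, T).\<close>
definition wsign :: "nat set \<Rightarrow> nat set \<Rightarrow> int" where
  "wsign S T = (-1) ^ card {(i, j). i \<in> S \<and> j \<in> T \<and> j < i}"

definition rmul :: "elt \<Rightarrow> elt \<Rightarrow> elt" where
  "rmul c d = (\<lambda>m. \<Sum>k1\<in>supp c. \<Sum>k2\<in>supp d.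
      if (\<lambda>j. fst k1 j + fst k2 j) = fst m \<and> snd k1 \<inter> snd k2 = {} \<and> snd k1 \<union> snd k2 = snd m
      then wsign (snd k1) (snd k2) * c k1 * d k2 else 0)"

definition lin :: "(mon \<Rightarrow> elt) \<Rightarrow> elt \<Rightarrow> elt" where
  "lin F c = (\<lambda>m. \<Sum>k\<in>supp c. c k * F k m)"

definition xvar :: "nat \<Rightarrow> elt" where
  "xvar j = mono (\<lambda>l. if l = j then 1 else 0, {})"

definition swapexp :: "nat \<Rightarrow> (nat \<Rightarrow> nat) \<Rightarrow> (nat \<Rightarrow> nat)" where
  "swapexp i a = (\<lambda>l. a (if l = i then i + 1 else if l = i + 1 then i else l))"

text \<open>Image of the monomial x^a omega_S under s_i (the ring automorphism with
  s_i(x_j) = x_{s_i(j)}, s_i(omega_j) = omega_j + delta_{ij}(x_i - x_{i+1}) omega_{i+1}).\<close>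
definition simg :: "nat \<Rightarrow> mon \<Rightarrow> elt" where
  "simg i m = (let a' = swapexp i (fst m); S = snd m in
     radd (mono (a', S))
       (if i \<in> S \<and> i + 1 \<notin> S
        then rmul (radd (xvar i) (rneg (xvar (i + 1)))) (mono (a', insert (i + 1) (S - {i})))
        else rzero))"

definition sact :: "nat \<Rightarrow> elt \<Rightarrow> elt" where
  "sact i c = lin (simg i) c"

definition dem :: "nat \<Rightarrow> nat \<Rightarrow> elt \<Rightarrow> elt" where
  "dem n i c = (THE g. g \<in> Rn n \<and>
      rmul (radd (xvar i) (rneg (xvar (i + 1)))) g = radd c (rneg (sact i c)))"

text \<open>S_n-invariants (S_n is generated by s_1, ..., s_{n-1}).\<close>
definition Rinv :: "nat \<Rightarrow> elt set" where
  "Rinv n = {f \<in> Rn n. \<forall>i. 1 \<le> i \<and> i < n \<longrightarrow> sact i f = f}"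

text \<open>Operators on R, represented as functions that vanish outside R.\<close>
definition restr :: "nat \<Rightarrow> (elt \<Rightarrow> elt) \<Rightarrow> elt \<Rightarrow> elt" where
  "restr n T = (\<lambda>g. if g \<in> Rn n then T g else rzero)"

definition mulop :: "nat \<Rightarrow> elt \<Rightarrow> elt \<Rightarrow> elt" where
  "mulop n f = restr n (rmul f)"

definition demop :: "nat \<Rightarrow> nat \<Rightarrow> elt \<Rightarrow> elt" where
  "demop n i = restr n (dem n i)"

definition idop :: "nat \<Rightarrow> elt \<Rightarrow> elt" where
  "idop n = restr n id"

definition zeroop :: "elt \<Rightarrow> elt" where
  "zeroop = (\<lambda>_. rzero)"

definition opadd :: "(elt \<Rightarrow> elt) \<Rightarrow> (elt \<Rightarrow> elt) \<Rightarrow> elt \<Rightarrow> elt" where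
  "opadd T U = (\<lambda>g. radd (T g) (U g))"

definition opscale :: "int \<Rightarrow> (elt \<Rightarrow> elt) \<Rightarrow> elt \<Rightarrow> elt" where
  "opscale k T = (\<lambda>g m. k * T g m)"

inductive_set An :: "nat \<Rightarrow> (elt \<Rightarrow> elt) set" for n where
  mul: "f \<in> Rn n \<Longrightarrow> mulop n f \<in> An n"
| dem: "1 \<le> i \<Longrightarrow> i < n \<Longrightarrow> demop n i \<in> An n"
| add: "T \<in> An n \<Longrightarrow> U \<in> An n \<Longrightarrow> opadd T U \<in> An n"
| comp: "T \<in> An n \<Longrightarrow> U \<in> An n \<Longrightarrow> T \<circ> U \<in> An n"

text \<open>Bigrading: deg x_j = (2,0), deg omega_j = (-2j, 2).\<close>
definition mdeg :: "mon \<Rightarrow> int \<times> int" where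
  "mdeg m = (2 * int (\<Sum>j\<in>{j. fst m j \<noteq> 0}. fst m j) - (\<Sum>j\<in>snd m. 2 * int j),
             2 * int (card (snd m)))"

definition homR :: "nat \<Rightarrow> int \<times> int \<Rightarrow> elt \<Rightarrow> bool" where
  "homR n d c \<longleftrightarrow> c \<in> Rn n \<and> (\<forall>m\<in>supp c. mdeg m = d)"

definition hom_op :: "nat \<Rightarrow> int \<times> int \<Rightarrow> (elt \<Rightarrow> elt) \<Rightarrow> bool" where
  "hom_op n d T \<longleftrightarrow>
     (\<forall>e c. homR n e c \<longrightarrow> homR n (fst d + fst e, snd d + snd e) (T c))"

text \<open>Parity of bidegree (a,b): omega's are odd and have second degree 2.\<close>
definition par :: "int \<times> int \<Rightarrow> nat" where
  "par d = nat ((snd d div 2) mod 2)"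

definition HZ :: "nat \<Rightarrow> (elt \<Rightarrow> elt) set" where
  "HZ n = {x \<in> An n. \<exists>d. hom_op n d x \<and>
      (\<forall>a\<in>An n. \<forall>e. hom_op n e a \<longrightarrow>
          x \<circ> a = opscale ((-1) ^ (par d * par e)) (a \<circ> x))}"

inductive_set Zs :: "nat \<Rightarrow> (elt \<Rightarrow> elt) set" for n where
  zero: "zeroop \<in> Zs n"
| add: "x \<in> HZ n \<Longrightarrow> y \<in> Zs n \<Longrightarrow> opadd x y \<in> Zs n"

end

theory Submission
  imports Defs "HOL-Library.Function_Algebras"
begin

text \<open>Multiplication by an S_n-invariant f supercommutes with the multiplication
  operators because R is supercommutative, and with each Demazure operator d_i because
  d_i(f g) = f d_i(g) whenever s_i f = f.  Conversely, a homogeneous supercentral operator x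
  is multiplication by h = x(1): supercommuting with multiplication by g gives
  x(g) = +-(g h), which is h g by supercommutativity (the two signs agree), and commuting
  with the even operator d_i gives d_i h = x(d_i 1) = 0, i.e. s_i h = h.  Since every
  invariant is the sum of its homogeneous components, which are again invariant,
  f |-> (multiplication by f) maps the invariants onto the supercenter; it is injective
  (evaluate at 1), multiplicative and preserves degrees.

  Most of the work concerns the concrete model: R is an associative supercommutative ring,
  s_i is a ring endomorphism, and d_i is well defined because x_i - x_(i+1) is a
  non-zero-divisor that divides f - s_i f.\<close>

lemma radd_eq: "radd c d = c + d" by (simp add: radd_def fun_eq_iff)
lemma rneg_eq: "rneg c = - c" by (simp add: rneg_def fun_eq_iff)
lemma rzero_eq: "rzero = 0" by (simp add: rzero_def fun_eq_iff)

definition zscale :: "int \<Rightarrow> elt \<Rightarrow> elt" where "zscale k c = (\<lambda>m. k * c m)"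

lemma sum_apply: "(\<Sum>a\<in>A. F a) m = (\<Sum>a\<in>A. F a m)"
  for F :: "'b \<Rightarrow> 'c \<Rightarrow> 'd::comm_monoid_add"
  by (induction A rule: infinite_finite_induct) auto

lemma Rn_zero: "0 \<in> Rn n" by (simp add: Rn_def supp_def)

lemma Rn_add: "c \<in> Rn n \<Longrightarrow> d \<in> Rn n \<Longrightarrow> c + d \<in> Rn n"
proof -
  assume "c \<in> Rn n" "d \<in> Rn n"
  moreover have "supp (c + d) \<subseteq> supp c \<union> supp d" by (auto simp: supp_def)
  ultimately show ?thesis unfolding Rn_def by (auto intro: finite_subset)
qed

lemma Rn_uminus: "c \<in> Rn n \<Longrightarrow> - c \<in> Rn n"
  by (simp add: Rn_def supp_def)

lemma Rn_diff: "c \<in> Rn n \<Longrightarrow> d \<in> Rn n \<Longrightarrow> c - d \<in> Rn n"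
  using Rn_add[of c n "- d"] Rn_uminus[of d n] by simp

lemma supp_zscale: "supp (zscale k c) \<subseteq> supp c" by (auto simp: supp_def zscale_def)

lemma Rn_zscale: "c \<in> Rn n \<Longrightarrow> zscale k c \<in> Rn n"
  using supp_zscale[of k c] unfolding Rn_def by (auto intro: finite_subset)

lemma supp_mono: "supp (mono k) = {k}" by (auto simp: supp_def mono_def)

lemma Rn_mono: "valid_mon n k \<Longrightarrow> mono k \<in> Rn n"
  by (simp add: Rn_def supp_mono)

lemma Rn_sum: "(\<And>a. a \<in> A \<Longrightarrow> G a \<in> Rn n) \<Longrightarrow> sum G A \<in> Rn n"
  by (induction A rule: infinite_finite_induct) (auto simp: Rn_zero Rn_add)

lemma Rn_finite_supp: "c \<in> Rn n \<Longrightarrow> finite (supp c)" by (simp add: Rn_def)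
lemma Rn_valid_mon: "c \<in> Rn n \<Longrightarrow> m \<in> supp c \<Longrightarrow> valid_mon n m" by (simp add: Rn_def)

lemma Rn_zscale_mono: "c \<in> Rn n \<Longrightarrow> k \<in> supp c \<Longrightarrow> zscale (c k) (mono k) \<in> Rn n"
  by (meson Rn_mono Rn_valid_mon Rn_zscale)

lemma zscale_add: "zscale k (c + d) = zscale k c + zscale k d"
  by (simp add: zscale_def fun_eq_iff algebra_simps)
lemma zscale_zscale: "zscale k (zscale l c) = zscale (k * l) c" by (simp add: zscale_def fun_eq_iff)
lemma zscale_one: "zscale 1 c = c" by (simp add: zscale_def)
lemma zscale_zero_right: "zscale k 0 = 0" by (simp add: zscale_def fun_eq_iff)
lemma zscale_sum: "zscale k (sum F A) = (\<Sum>a\<in>A. zscale k (F a))"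
  by (simp add: zscale_def fun_eq_iff sum_apply sum_distrib_left)
lemma zscale_diff: "zscale k (c - d) = zscale k c - zscale k d"
  by (simp add: zscale_def fun_eq_iff algebra_simps)
lemma zscale_minus_one: "zscale (-1) c = - c" by (simp add: zscale_def fun_eq_iff)
lemma zscale_add_left: "zscale (k + l) c = zscale k c + zscale l c"
  by (simp add: zscale_def fun_eq_iff algebra_simps)

lemma monomial_expansion: "c \<in> Rn n \<Longrightarrow> c = (\<Sum>k\<in>supp c. zscale (c k) (mono k))"
proof (rule ext)
  fix m assume c: "c \<in> Rn n"
  have "(\<Sum>k\<in>supp c. zscale (c k) (mono k)) m = (\<Sum>k\<in>supp c. if m = k then c k else 0)"
    by (simp add: sum_apply zscale_def mono_def if_distrib cong: if_cong)
  also have "\<dots> = c m" using c by (simp add: supp_def Rn_def)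
  finally show "c m = (\<Sum>k\<in>supp c. zscale (c k) (mono k)) m" by simp
qed

definition zlinear :: "nat \<Rightarrow> (elt \<Rightarrow> elt) \<Rightarrow> bool" where
  "zlinear n L \<longleftrightarrow> (\<forall>c\<in>Rn n. \<forall>d\<in>Rn n. L (c + d) = L c + L d) \<and>
     (\<forall>k. \<forall>c\<in>Rn n. L (zscale k c) = zscale k (L c))"

lemma zlinear_add: "zlinear n L \<Longrightarrow> c \<in> Rn n \<Longrightarrow> d \<in> Rn n \<Longrightarrow> L (c + d) = L c + L d"
  by (simp add: zlinear_def)

lemma zlinear_zscale: "zlinear n L \<Longrightarrow> c \<in> Rn n \<Longrightarrow> L (zscale k c) = zscale k (L c)"
  by (simp add: zlinear_def)

lemma zlinear_zero: "zlinear n L \<Longrightarrow> L 0 = 0"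
  using zlinear_add[of n L 0 0] Rn_zero by simp

lemma zlinear_uminus: "zlinear n L \<Longrightarrow> c \<in> Rn n \<Longrightarrow> L (- c) = - L c"
  using zlinear_zscale[of n L c "-1"] by (simp add: zscale_minus_one)

lemma zlinear_diff: "zlinear n L \<Longrightarrow> c \<in> Rn n \<Longrightarrow> d \<in> Rn n \<Longrightarrow> L (c - d) = L c - L d"
  using zlinear_add[of n L c "- d"] zlinear_uminus[of n L d] Rn_uminus[of d n] by simp

lemma zlinear_sum:
  "zlinear n L \<Longrightarrow> (\<And>a. a \<in> A \<Longrightarrow> G a \<in> Rn n) \<Longrightarrow> L (sum G A) = (\<Sum>a\<in>A. L (G a))"
  by (induction A rule: infinite_finite_induct) (auto simp: zlinear_zero zlinear_add Rn_sum)

lemma zlinear_comp: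
  "zlinear n L1 \<Longrightarrow> zlinear n L2 \<Longrightarrow> (\<And>c. c \<in> Rn n \<Longrightarrow> L2 c \<in> Rn n) \<Longrightarrow> zlinear n (\<lambda>c. L1 (L2 c))"
  by (simp add: zlinear_def Rn_add Rn_zscale)

lemma zlinear_id: "zlinear n (\<lambda>c. c)" by (simp add: zlinear_def)

lemma zlinear_expansion:
  assumes L: "zlinear n L" and c: "c \<in> Rn n"
  shows "L c = (\<Sum>k\<in>supp c. zscale (c k) (L (mono k)))"
proof -
  have "L c = (\<Sum>k\<in>supp c. L (zscale (c k) (mono k)))"
    by (subst monomial_expansion[OF c]) (rule zlinear_sum[OF L Rn_zscale_mono[OF c]])
  also have "\<dots> = (\<Sum>k\<in>supp c. zscale (c k) (L (mono k)))"
    by (rule sum.cong) (auto intro: zlinear_zscale[OF L] Rn_mono Rn_valid_mon c)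
  finally show ?thesis .
qed

lemma zlinear_eqI:
  "zlinear n L \<Longrightarrow> zlinear n L' \<Longrightarrow> (\<And>k. valid_mon n k \<Longrightarrow> L (mono k) = L' (mono k))
  \<Longrightarrow> c \<in> Rn n \<Longrightarrow> L c = L' c"
  by (simp add: zlinear_expansion Rn_valid_mon cong: sum.cong)

section \<open>The supercommutative ring R\<close>

definition inversions :: "nat set \<Rightarrow> nat set \<Rightarrow> nat" where
  "inversions S T = card {(i, j). i \<in> S \<and> j \<in> T \<and> j < i}"

lemma wsign_inversions: "wsign S T = (-1) ^ inversions S T"
  by (simp add: wsign_def inversions_def)

lemma finite_inversion_pairs:
  "finite S \<Longrightarrow> finite T \<Longrightarrow> finite {(i, j). i \<in> S \<and> j \<in> T \<and> j < i}"
  by (rule finite_subset[of _ "S \<times> T"]) auto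

lemma inversions_Un_left:
  assumes "finite S" "finite T" "finite U" "S \<inter> T = {}"
  shows "inversions (S \<union> T) U = inversions S U + inversions T U"
proof -
  have "{(i, j). i \<in> S \<union> T \<and> j \<in> U \<and> j < i} =
      {(i, j). i \<in> S \<and> j \<in> U \<and> j < i} \<union> {(i, j). i \<in> T \<and> j \<in> U \<and> j < i}"
    by auto
  with assms show ?thesis
    unfolding inversions_def by (simp add: card_Un_disjoint[symmetric] finite_inversion_pairs disjoint_iff)
qed

lemma inversions_Un_right:
  assumes "finite S" "finite T" "finite U" "T \<inter> U = {}"
  shows "inversions S (T \<union> U) = inversions S T + inversions S U"
proof -
  have "{(i, j). i \<in> S \<and> j \<in> T \<union> U \<and> j < i} =
      {(i, j). i \<in> S \<and> j \<in> T \<and> j < i} \<union> {(i, j). i \<in> S \<and> j \<in> U \<and> j < i}"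
    by auto
  with assms show ?thesis
    unfolding inversions_def by (simp add: card_Un_disjoint[symmetric] finite_inversion_pairs disjoint_iff)
qed

definition mon_add :: "mon \<Rightarrow> mon \<Rightarrow> mon" where
  "mon_add k1 k2 = ((\<lambda>j. fst k1 j + fst k2 j), snd k1 \<union> snd k2)"

definition mon_mul :: "mon \<Rightarrow> mon \<Rightarrow> elt" where
  "mon_mul k1 k2 = (if snd k1 \<inter> snd k2 = {}
     then zscale (wsign (snd k1) (snd k2)) (mono (mon_add k1 k2)) else 0)"

lemma mon_mul_disjoint:
  "snd k1 \<inter> snd k2 = {} \<Longrightarrow> mon_mul k1 k2 = zscale (wsign (snd k1) (snd k2)) (mono (mon_add k1 k2))"
  by (simp add: mon_mul_def)

lemma mon_mul_overlap: "snd k1 \<inter> snd k2 \<noteq> {} \<Longrightarrow> mon_mul k1 k2 = 0"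
  by (simp add: mon_mul_def)

lemma mon_mul_apply:
  "mon_mul k1 k2 m = (if (\<lambda>j. fst k1 j + fst k2 j) = fst m \<and> snd k1 \<inter> snd k2 = {} \<and>
     snd k1 \<union> snd k2 = snd m then wsign (snd k1) (snd k2) else 0)"
  by (cases m) (auto simp: mon_mul_def zscale_def mono_def mon_add_def)

lemma rmul_eq_sum_over:
  assumes A: "finite A" "supp c \<subseteq> A" and B: "finite B" "supp d \<subseteq> B"
  shows "rmul c d m = (\<Sum>k1\<in>A. \<Sum>k2\<in>B. c k1 * d k2 * mon_mul k1 k2 m)"
proof -
  have "rmul c d m = (\<Sum>k1\<in>supp c. \<Sum>k2\<in>supp d. c k1 * d k2 * mon_mul k1 k2 m)"
    unfolding rmul_def mon_mul_apply by (intro sum.cong) auto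
  also have "\<dots> = (\<Sum>k1\<in>supp c. \<Sum>k2\<in>B. c k1 * d k2 * mon_mul k1 k2 m)"
    by (intro sum.cong refl sum.mono_neutral_left B) (auto simp: supp_def)
  also have "\<dots> = (\<Sum>k1\<in>A. \<Sum>k2\<in>B. c k1 * d k2 * mon_mul k1 k2 m)"
    by (intro sum.mono_neutral_left A) (auto simp: supp_def)
  finally show ?thesis .
qed

lemma rmul_add_left:
  assumes "c \<in> Rn n" "c' \<in> Rn n" "d \<in> Rn n"
  shows "rmul (c + c') d = rmul c d + rmul c' d"
proof (rule ext)
  fix m
  let ?A = "supp c \<union> supp c'"
  have f: "finite ?A" "finite (supp d)" using assms by (auto simp: Rn_finite_supp)
  have s: "supp (c + c') \<subseteq> ?A" "supp c \<subseteq> ?A" "supp c' \<subseteq> ?A" by (auto simp: supp_def)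
  show "rmul (c + c') d m = (rmul c d + rmul c' d) m"
    using s by (simp add: rmul_eq_sum_over[OF f(1) _ f(2) subset_refl] sum.distrib[symmetric]
        algebra_simps)
qed

lemma rmul_add_right:
  assumes "c \<in> Rn n" "d \<in> Rn n" "d' \<in> Rn n"
  shows "rmul c (d + d') = rmul c d + rmul c d'"
proof (rule ext)
  fix m
  let ?B = "supp d \<union> supp d'"
  have f: "finite (supp c)" "finite ?B" using assms by (auto simp: Rn_finite_supp)
  have s: "supp (d + d') \<subseteq> ?B" "supp d \<subseteq> ?B" "supp d' \<subseteq> ?B" by (auto simp: supp_def)
  show "rmul c (d + d') m = (rmul c d + rmul c d') m"
    using s by (simp add: rmul_eq_sum_over[OF f(1) subset_refl f(2)] sum.distrib[symmetric]
        algebra_simps)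
qed

lemma rmul_zscale_left:
  assumes "c \<in> Rn n" "d \<in> Rn n"
  shows "rmul (zscale k c) d = zscale k (rmul c d)"
proof (rule ext)
  fix m
  have f: "finite (supp c)" "finite (supp d)" using assms by (auto simp: Rn_finite_supp)
  show "rmul (zscale k c) d m = zscale k (rmul c d) m"
    using rmul_eq_sum_over[OF f(1) supp_zscale f(2) subset_refl, of k]
      rmul_eq_sum_over[OF f(1) subset_refl f(2) subset_refl]
    by (simp add: zscale_def sum_distrib_left algebra_simps)
qed

lemma rmul_zscale_right:
  assumes "c \<in> Rn n" "d \<in> Rn n"
  shows "rmul c (zscale k d) = zscale k (rmul c d)"
proof (rule ext)
  fix m
  have f: "finite (supp c)" "finite (supp d)" using assms by (auto simp: Rn_finite_supp)
  show "rmul c (zscale k d) m = zscale k (rmul c d) m"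
    using rmul_eq_sum_over[OF f(1) subset_refl f(2) supp_zscale, of k]
      rmul_eq_sum_over[OF f(1) subset_refl f(2) subset_refl]
    by (simp add: zscale_def sum_distrib_left algebra_simps)
qed

lemma rmul_zero_left: "rmul 0 d = 0" by (simp add: rmul_def supp_def fun_eq_iff)
lemma rmul_zero_right: "rmul c 0 = 0" by (simp add: rmul_def supp_def fun_eq_iff)

lemma rmul_mono: "rmul (mono k1) (mono k2) = mon_mul k1 k2"
  by (rule ext) (simp add: rmul_eq_sum_over[of "{k1}" _ "{k2}"] supp_mono, simp add: mono_def)

lemma supp_rmul:
  assumes "m \<in> supp (rmul c d)"
  shows "\<exists>k1\<in>supp c. \<exists>k2\<in>supp d. snd k1 \<inter> snd k2 = {} \<and> m = mon_add k1 k2"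
proof -
  obtain k1 where k1: "k1 \<in> supp c" "(\<Sum>k2\<in>supp d.
      if (\<lambda>j. fst k1 j + fst k2 j) = fst m \<and> snd k1 \<inter> snd k2 = {} \<and> snd k1 \<union> snd k2 = snd m
      then wsign (snd k1) (snd k2) * c k1 * d k2 else 0) \<noteq> 0"
    using assms unfolding rmul_def supp_def by (auto elim: sum.not_neutral_contains_not_neutral)
  then obtain k2 where k2: "k2 \<in> supp d" "(\<lambda>j. fst k1 j + fst k2 j) = fst m"
      "snd k1 \<inter> snd k2 = {}" "snd k1 \<union> snd k2 = snd m"
    by (auto elim!: sum.not_neutral_contains_not_neutral split: if_splits)
  with k1 show ?thesis by (intro bexI[of _ k1] bexI[of _ k2]) (auto simp: mon_add_def prod_eq_iff)
qed

lemma valid_mon_add: "valid_mon n k1 \<Longrightarrow> valid_mon n k2 \<Longrightarrow> valid_mon n (mon_add k1 k2)"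
  by (simp add: valid_mon_def mon_add_def)

lemma Rn_rmul:
  assumes "c \<in> Rn n" "d \<in> Rn n"
  shows "rmul c d \<in> Rn n"
proof -
  have "supp (rmul c d) \<subseteq> case_prod mon_add ` (supp c \<times> supp d)"
    by (auto dest!: supp_rmul)
  moreover have "finite (case_prod mon_add ` (supp c \<times> supp d))"
    using assms by (simp add: Rn_finite_supp)
  ultimately have "finite (supp (rmul c d))" by (rule finite_subset)
  moreover have "\<forall>m\<in>supp (rmul c d). valid_mon n m"
    using assms by (auto dest!: supp_rmul intro!: valid_mon_add simp: Rn_valid_mon)
  ultimately show ?thesis by (simp add: Rn_def)
qed

lemma zlinear_rmul_left: "d \<in> Rn n \<Longrightarrow> zlinear n (\<lambda>c. rmul c d)"
  by (simp add: zlinear_def rmul_add_left rmul_zscale_left)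

lemma zlinear_rmul_right: "c \<in> Rn n \<Longrightarrow> zlinear n (\<lambda>d. rmul c d)"
  by (simp add: zlinear_def rmul_add_right rmul_zscale_right)

lemma rmul_diff_left: "c \<in> Rn n \<Longrightarrow> c' \<in> Rn n \<Longrightarrow> d \<in> Rn n \<Longrightarrow> rmul (c - c') d = rmul c d - rmul c' d"
  using zlinear_diff[OF zlinear_rmul_left] by blast

lemma rmul_diff_right: "c \<in> Rn n \<Longrightarrow> d \<in> Rn n \<Longrightarrow> d' \<in> Rn n \<Longrightarrow> rmul c (d - d') = rmul c d - rmul c d'"
  using zlinear_diff[OF zlinear_rmul_right] by blast

lemma rmul_sum_right:
  "c \<in> Rn n \<Longrightarrow> (\<And>a. a \<in> A \<Longrightarrow> G a \<in> Rn n) \<Longrightarrow> rmul c (sum G A) = (\<Sum>a\<in>A. rmul c (G a))"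
  using zlinear_sum[OF zlinear_rmul_right] by blast

lemma zbilinear_eqI:
  assumes left: "\<And>d. d \<in> Rn n \<Longrightarrow> zlinear n (\<lambda>c. B c d) \<and> zlinear n (\<lambda>c. B' c d)"
    and right: "\<And>c. c \<in> Rn n \<Longrightarrow> zlinear n (B c) \<and> zlinear n (B' c)"
    and mono: "\<And>k1 k2. valid_mon n k1 \<Longrightarrow> valid_mon n k2 \<Longrightarrow> B (mono k1) (mono k2) = B' (mono k1) (mono k2)"
    and "c \<in> Rn n" "d \<in> Rn n"
  shows "B c d = B' c d"
proof (rule zlinear_eqI[of n "\<lambda>c. B c d" "\<lambda>c. B' c d"])
  fix k1 assume "valid_mon n k1"
  then show "B (mono k1) d = B' (mono k1) d"
    using right[OF Rn_mono] mono \<open>d \<in> Rn n\<close> by (blast intro: zlinear_eqI)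
qed (use left assms in auto)

lemma valid_mon_finite: "valid_mon n k \<Longrightarrow> finite (snd k)"
  by (auto simp: valid_mon_def intro: finite_subset)

lemma Rn_mon_mul: "valid_mon n k1 \<Longrightarrow> valid_mon n k2 \<Longrightarrow> mon_mul k1 k2 \<in> Rn n"
  by (simp add: mon_mul_def Rn_zero Rn_zscale Rn_mono valid_mon_add)

lemma rmul_mon_mul_mono:
  assumes "valid_mon n k1" "valid_mon n k2" "valid_mon n k3"
  shows "rmul (mon_mul k1 k2) (mono k3) = (if snd k1 \<inter> snd k2 = {}
    then zscale (wsign (snd k1) (snd k2)) (mon_mul (mon_add k1 k2) k3) else 0)"
  using assms rmul_zscale_left[of "mono (mon_add k1 k2)" n "mono k3"]
  by (auto simp: mon_mul_def rmul_zero_left rmul_mono Rn_mono valid_mon_add)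

lemma rmul_mono_mon_mul:
  assumes "valid_mon n k1" "valid_mon n k2" "valid_mon n k3"
  shows "rmul (mono k1) (mon_mul k2 k3) = (if snd k2 \<inter> snd k3 = {}
    then zscale (wsign (snd k2) (snd k3)) (mon_mul k1 (mon_add k2 k3)) else 0)"
  using assms rmul_zscale_right[of "mono k1" n "mono (mon_add k2 k3)"]
  by (auto simp: mon_mul_def rmul_zero_right rmul_mono Rn_mono valid_mon_add)

lemma mon_add_assoc: "mon_add (mon_add k1 k2) k3 = mon_add k1 (mon_add k2 k3)"
  by (simp add: mon_add_def add.assoc Un_assoc)

lemma snd_mon_add: "snd (mon_add k1 k2) = snd k1 \<union> snd k2" by (simp add: mon_add_def)

lemma wsign_assoc:
  assumes "finite S1" "finite S2" "finite S3" "S1 \<inter> S2 = {}" "S1 \<inter> S3 = {}" "S2 \<inter> S3 = {}"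
  shows "wsign S1 S2 * wsign (S1 \<union> S2) S3 = wsign S2 S3 * wsign S1 (S2 \<union> S3)"
  using assms by (simp add: wsign_inversions inversions_Un_left inversions_Un_right
      power_add[symmetric] algebra_simps)

lemma mon_mul_assoc:
  assumes v: "valid_mon n k1" "valid_mon n k2" "valid_mon n k3"
  shows "rmul (mon_mul k1 k2) (mono k3) = rmul (mono k1) (mon_mul k2 k3)"
proof -
  have f: "finite (snd k1)" "finite (snd k2)" "finite (snd k3)"
    using v by (auto simp: valid_mon_finite)
  let ?P = "snd k1 \<inter> snd k2 = {} \<and> snd k1 \<inter> snd k3 = {} \<and> snd k2 \<inter> snd k3 = {}"
  have "rmul (mon_mul k1 k2) (mono k3) = (if snd k1 \<inter> snd k2 = {}
      then zscale (wsign (snd k1) (snd k2)) (mon_mul (mon_add k1 k2) k3) else 0)"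
    by (rule rmul_mon_mul_mono[OF v])
  also have "\<dots> = (if ?P then zscale (wsign (snd k1) (snd k2) *
      wsign (snd k1 \<union> snd k2) (snd k3)) (mono (mon_add (mon_add k1 k2) k3)) else 0)"
    by (auto simp: mon_mul_def snd_mon_add zscale_zscale zscale_zero_right)
  also have "\<dots> = (if ?P then zscale (wsign (snd k2) (snd k3) *
      wsign (snd k1) (snd k2 \<union> snd k3)) (mono (mon_add k1 (mon_add k2 k3))) else 0)"
    using wsign_assoc[OF f] by (simp add: mon_add_assoc)
  also have "\<dots> = (if snd k2 \<inter> snd k3 = {}
      then zscale (wsign (snd k2) (snd k3)) (mon_mul k1 (mon_add k2 k3)) else 0)"
    by (auto simp: mon_mul_def snd_mon_add zscale_zscale zscale_zero_right)
  also have "\<dots> = rmul (mono k1) (mon_mul k2 k3)"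
    by (rule rmul_mono_mon_mul[OF v, symmetric])
  finally show ?thesis .
qed

lemma rmul_assoc:
  assumes c: "c \<in> Rn n" and d: "d \<in> Rn n" and e: "e \<in> Rn n"
  shows "rmul (rmul c d) e = rmul c (rmul d e)"
proof (rule zbilinear_eqI[of n "\<lambda>c d. rmul (rmul c d) e" "\<lambda>c d. rmul c (rmul d e)", OF _ _ _ c d])
  fix k1 k2 assume k: "valid_mon n k1" "valid_mon n k2"
  have m: "mono k1 \<in> Rn n" "mono k2 \<in> Rn n" using k by (auto intro: Rn_mono)
  show "rmul (rmul (mono k1) (mono k2)) e = rmul (mono k1) (rmul (mono k2) e)"
  proof (rule zlinear_eqI[of n "rmul (rmul (mono k1) (mono k2))" "\<lambda>e. rmul (mono k1) (rmul (mono k2) e)"])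
    show "zlinear n (rmul (rmul (mono k1) (mono k2)))"
      using m by (intro zlinear_rmul_right Rn_rmul)
    show "zlinear n (\<lambda>e. rmul (mono k1) (rmul (mono k2) e))"
      by (rule zlinear_comp[OF zlinear_rmul_right[OF m(1)] zlinear_rmul_right[OF m(2)] Rn_rmul[OF m(2)]])
    show "rmul (rmul (mono k1) (mono k2)) (mono k3) = rmul (mono k1) (rmul (mono k2) (mono k3))"
      if "valid_mon n k3" for k3
      using mon_mul_assoc[OF k that] by (simp add: rmul_mono)
  qed (rule e)
next
  fix d assume d: "d \<in> Rn n"
  show "zlinear n (\<lambda>c. rmul (rmul c d) e) \<and> zlinear n (\<lambda>c. rmul c (rmul d e))"
    by (simp add: zlinear_comp[OF zlinear_rmul_left[OF e] zlinear_rmul_left[OF d] Rn_rmul[OF _ d]]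
        zlinear_rmul_left[OF Rn_rmul[OF d e]])
next
  fix c assume c: "c \<in> Rn n"
  show "zlinear n (\<lambda>d. rmul (rmul c d) e) \<and> zlinear n (\<lambda>d. rmul c (rmul d e))"
    by (simp add: zlinear_comp[OF zlinear_rmul_left[OF e] zlinear_rmul_right[OF c] Rn_rmul[OF c]]
        zlinear_comp[OF zlinear_rmul_right[OF c] zlinear_rmul_left[OF e] Rn_rmul[OF _ e]])
qed

lemma valid_mon_one: "valid_mon n (\<lambda>_. 0, {})" by (simp add: valid_mon_def)
lemma Rn_rone: "rone \<in> Rn n" by (simp add: rone_def Rn_mono valid_mon_one)

lemma rmul_one_left: "c \<in> Rn n \<Longrightarrow> rmul rone c = c"
  by (rule zlinear_eqI[of n "rmul rone" "\<lambda>c. c"])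
    (auto intro!: zlinear_rmul_right zlinear_id Rn_rone Rn_mono valid_mon_one simp: rone_def rmul_mono mon_mul_def
      wsign_def mon_add_def zscale_one)

lemma rmul_one_right: "c \<in> Rn n \<Longrightarrow> rmul c rone = c"
  by (rule zlinear_eqI[of n "\<lambda>c. rmul c rone" "\<lambda>c. c"])
    (auto intro!: zlinear_rmul_left zlinear_id Rn_rone Rn_mono valid_mon_one simp: rone_def rmul_mono mon_mul_def
      wsign_def mon_add_def zscale_one)

section \<open>Parity twist and supercommutativity\<close>

text \<open>For odd p, ptwist p is the parity automorphism of R (-1 on odd elements); for even p it
  is the identity.\<close>

definition ptwist :: "nat \<Rightarrow> elt \<Rightarrow> elt" where
  "ptwist p c = (\<lambda>m. (-1) ^ (p * card (snd m)) * c m)"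

lemma supp_ptwist: "supp (ptwist p c) = supp c" by (auto simp: supp_def ptwist_def)
lemma Rn_ptwist: "c \<in> Rn n \<Longrightarrow> ptwist p c \<in> Rn n" by (simp add: Rn_def supp_ptwist)
lemma ptwist_ptwist: "ptwist p (ptwist p c) = c"
  by (simp add: ptwist_def fun_eq_iff mult.assoc[symmetric])
lemma ptwist_0: "ptwist 0 c = c" by (simp add: ptwist_def)
lemma ptwist_zero: "ptwist p 0 = 0" by (simp add: ptwist_def fun_eq_iff)
lemma zlinear_ptwist: "zlinear n (ptwist p)"
  by (simp add: zlinear_def ptwist_def fun_eq_iff zscale_def algebra_simps)
lemma ptwist_zscale: "ptwist p (zscale k c) = zscale k (ptwist p c)"
  by (simp add: ptwist_def zscale_def fun_eq_iff)
lemma ptwist_add: "ptwist p (c + d) = ptwist p c + ptwist p d"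
  by (simp add: ptwist_def fun_eq_iff algebra_simps)

lemma ptwist_mono: "ptwist p (mono k) = zscale ((-1) ^ (p * card (snd k))) (mono k)"
  by (rule ext) (simp add: ptwist_def zscale_def mono_def)

lemma ptwist_mon_mul:
  assumes "valid_mon n k1" "valid_mon n k2"
  shows "ptwist p (mon_mul k1 k2) =
    zscale ((-1) ^ (p * card (snd k1))) (zscale ((-1) ^ (p * card (snd k2))) (mon_mul k1 k2))"
  using assms by (auto simp: mon_mul_def ptwist_zscale ptwist_mono ptwist_zero zscale_zscale zscale_zero_right
      mon_add_def card_Un_disjoint valid_mon_finite algebra_simps power_add)

lemma ptwist_rmul:
  assumes "c \<in> Rn n" "d \<in> Rn n"
  shows "ptwist p (rmul c d) = rmul (ptwist p c) (ptwist p d)"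
proof (rule zbilinear_eqI[of n "\<lambda>c d. ptwist p (rmul c d)" "\<lambda>c d. rmul (ptwist p c) (ptwist p d)",
      OF _ _ _ assms])
  fix k1 k2 assume k: "valid_mon n k1" "valid_mon n k2"
  then show "ptwist p (rmul (mono k1) (mono k2)) = rmul (ptwist p (mono k1)) (ptwist p (mono k2))"
    by (simp add: ptwist_mono rmul_zscale_left[OF Rn_mono[OF k(1)] Rn_zscale[OF Rn_mono[OF k(2)]]]
        rmul_zscale_right[OF Rn_mono[OF k(1)] Rn_mono[OF k(2)]] rmul_mono ptwist_mon_mul[OF k]
        zscale_zscale mult.commute)
next
  fix d assume d: "d \<in> Rn n"
  show "zlinear n (\<lambda>c. ptwist p (rmul c d)) \<and> zlinear n (\<lambda>c. rmul (ptwist p c) (ptwist p d))"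
    by (simp add: zlinear_comp[OF zlinear_ptwist zlinear_rmul_left[OF d] Rn_rmul[OF _ d]]
        zlinear_comp[OF zlinear_rmul_left[OF Rn_ptwist[OF d]] zlinear_ptwist Rn_ptwist])
next
  fix c assume c: "c \<in> Rn n"
  show "zlinear n (\<lambda>d. ptwist p (rmul c d)) \<and> zlinear n (\<lambda>d. rmul (ptwist p c) (ptwist p d))"
    by (simp add: zlinear_comp[OF zlinear_ptwist zlinear_rmul_right[OF c] Rn_rmul[OF c]]
        zlinear_comp[OF zlinear_rmul_right[OF Rn_ptwist[OF c]] zlinear_ptwist Rn_ptwist])
qed

lemma inversions_swap:
  assumes f: "finite S" "finite T" and d: "S \<inter> T = {}"
  shows "inversions S T + inversions T S = card S * card T"
proof -
  let ?X = "{(i, j). i \<in> S \<and> j \<in> T \<and> j < i}"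
  let ?Y = "{(i, j). i \<in> S \<and> j \<in> T \<and> i < j}"
  have "S \<times> T = ?X \<union> ?Y" using d by (auto simp: linorder_neq_iff)
  moreover have "?X \<inter> ?Y = {}" by auto
  moreover have "finite ?X" "finite ?Y" using f by (auto intro: finite_subset[of _ "S \<times> T"])
  ultimately have "card S * card T = card ?X + card ?Y"
    by (simp add: card_Un_disjoint card_cartesian_product[symmetric])
  moreover have "?Y = prod.swap ` {(i, j). i \<in> T \<and> j \<in> S \<and> j < i}" by auto
  then have "card ?Y = inversions T S" by (simp add: inversions_def card_image)
  ultimately show ?thesis by (simp add: inversions_def)
qed

lemma mon_mul_commute:
  assumes v: "valid_mon n k1" "valid_mon n k2"
  shows "mon_mul k2 k1 = zscale ((-1) ^ (card (snd k1) * card (snd k2))) (mon_mul k1 k2)"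
proof (cases "snd k1 \<inter> snd k2 = {}")
  case True
  have f: "finite (snd k1)" "finite (snd k2)" using v by (auto simp: valid_mon_finite)
  let ?i12 = "inversions (snd k1) (snd k2)" and ?i21 = "inversions (snd k2) (snd k1)"
  have e: "?i21 + 2 * ?i12 = card (snd k1) * card (snd k2) + ?i12"
    using inversions_swap[OF f True] by simp
  have "wsign (snd k2) (snd k1) = (-1::int) ^ (?i21 + 2 * ?i12)"
    by (simp add: wsign_inversions power_add power_mult)
  also have "\<dots> = (-1) ^ (card (snd k1) * card (snd k2)) * wsign (snd k1) (snd k2)"
    by (simp only: e power_add wsign_inversions)
  finally have "wsign (snd k2) (snd k1) =
      (-1) ^ (card (snd k1) * card (snd k2)) * wsign (snd k1) (snd k2)" .
  moreover have "mon_add k2 k1 = mon_add k1 k2" by (simp add: mon_add_def add.commute Un_commute)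
  ultimately show ?thesis using True by (simp add: mon_mul_def zscale_zscale Int_commute)
qed (simp add: mon_mul_def zscale_zero_right Int_commute)

lemma rmul_supercommute:
  assumes f: "f \<in> Rn n" and par: "\<And>m. m \<in> supp f \<Longrightarrow> (-1) ^ card (snd m) = ((-1) ^ p :: int)"
    and h: "h \<in> Rn n"
  shows "rmul h f = rmul f (ptwist p h)"
proof (rule zlinear_eqI[of n "\<lambda>h. rmul h f" "\<lambda>h. rmul f (ptwist p h)", OF _ _ _ h])
  show "zlinear n (\<lambda>h. rmul f (ptwist p h))"
    by (rule zlinear_comp[OF zlinear_rmul_right[OF f] zlinear_ptwist Rn_ptwist])
  fix k assume k: "valid_mon n k"
  have "rmul (mono k) f = (\<Sum>m\<in>supp f. zscale (f m) (rmul (mono k) (mono m)))"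
    using zlinear_expansion[OF zlinear_rmul_right[OF Rn_mono[OF k]] f] .
  also have "\<dots> = (\<Sum>m\<in>supp f. zscale ((-1) ^ (p * card (snd k))) (zscale (f m) (rmul (mono m) (mono k))))"
  proof (rule sum.cong[OF refl])
    fix m assume m: "m \<in> supp f"
    have "((-1::int) ^ (card (snd k) * card (snd m))) = ((-1) ^ card (snd m)) ^ card (snd k)"
      by (simp add: power_mult[symmetric] mult.commute)
    also have "\<dots> = (-1) ^ (p * card (snd k))" using par[OF m] by (simp add: power_mult)
    finally show "zscale (f m) (rmul (mono k) (mono m)) =
        zscale ((-1) ^ (p * card (snd k))) (zscale (f m) (rmul (mono m) (mono k)))"
      by (simp add: rmul_mono mon_mul_commute[OF Rn_valid_mon[OF f m] k] zscale_zscale mult.commute)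
  qed
  also have "\<dots> = zscale ((-1) ^ (p * card (snd k))) (rmul f (mono k))"
    using zlinear_expansion[OF zlinear_rmul_left[OF Rn_mono[OF k]] f] by (simp add: zscale_sum)
  also have "\<dots> = rmul f (ptwist p (mono k))"
    using f k by (simp add: ptwist_mono rmul_zscale_right Rn_mono)
  finally show "rmul (mono k) f = rmul f (ptwist p (mono k))" .
qed (rule zlinear_rmul_left[OF f])

lemma neg_one_power_nat_mod_two: "(-1::int) ^ nat (int c mod 2) = (-1) ^ c"
proof -
  have "int c mod 2 = int (c mod 2)" by (simp add: of_nat_mod)
  then show ?thesis by (cases "even c") (simp_all add: odd_iff_mod_2_eq_one even_iff_mod_2_eq_zero)
qed

definition xdeg :: "nat \<Rightarrow> (nat \<Rightarrow> nat) \<Rightarrow> nat" where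
  "xdeg n a = (\<Sum>j\<in>{1..n}. a j)"

lemma mdeg_valid_mon:
  assumes "valid_mon n k"
  shows "mdeg k = (2 * int (xdeg n (fst k)) - (\<Sum>j\<in>snd k. 2 * int j), 2 * int (card (snd k)))"
proof -
  have "(\<Sum>j\<in>{j. fst k j \<noteq> 0}. fst k j) = (\<Sum>j\<in>{1..n}. fst k j)"
    using assms by (intro sum.mono_neutral_left) (auto simp: valid_mon_def)
  then show ?thesis by (simp add: mdeg_def xdeg_def)
qed

lemma mdeg_mon_add:
  assumes v: "valid_mon n k1" "valid_mon n k2" and d: "snd k1 \<inter> snd k2 = {}"
  shows "mdeg (mon_add k1 k2) = (fst (mdeg k1) + fst (mdeg k2), snd (mdeg k1) + snd (mdeg k2))"
proof -
  have f: "finite (snd k1)" "finite (snd k2)" using v by (auto simp: valid_mon_finite)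
  have "xdeg n (fst (mon_add k1 k2)) = xdeg n (fst k1) + xdeg n (fst k2)"
    by (simp add: xdeg_def mon_add_def sum.distrib)
  moreover have "(\<Sum>j\<in>snd (mon_add k1 k2). 2 * int j) = (\<Sum>j\<in>snd k1. 2 * int j) + (\<Sum>j\<in>snd k2. 2 * int j)"
    using f d by (simp add: snd_mon_add sum.union_disjoint)
  moreover have "card (snd (mon_add k1 k2)) = card (snd k1) + card (snd k2)"
    using f d by (simp add: snd_mon_add card_Un_disjoint)
  ultimately show ?thesis
    using mdeg_valid_mon[OF valid_mon_add[OF v]] mdeg_valid_mon[OF v(1)] mdeg_valid_mon[OF v(2)] by simp
qed

lemma homR_zero: "homR n d 0" by (simp add: homR_def Rn_zero supp_def)

lemma homR_add: "homR n d c \<Longrightarrow> homR n d c' \<Longrightarrow> homR n d (c + c')"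
  unfolding homR_def supp_def by (metis (mono_tags, lifting) Rn_add add.right_neutral mem_Collect_eq plus_fun_apply)

lemma homR_zscale: "homR n d c \<Longrightarrow> homR n d (zscale k c)"
  unfolding homR_def using Rn_zscale supp_zscale by blast

lemma homR_uminus: "homR n d c \<Longrightarrow> homR n d (- c)"
  by (auto simp: homR_def Rn_uminus supp_def)

lemma homR_diff: "homR n d c \<Longrightarrow> homR n d c' \<Longrightarrow> homR n d (c - c')"
  using homR_add[of n d c "- c'"] homR_uminus[of n d c'] by simp

lemma homR_sum: "(\<And>a. a \<in> A \<Longrightarrow> homR n d (G a)) \<Longrightarrow> homR n d (sum G A)"
  by (induction A rule: infinite_finite_induct) (auto simp: homR_zero homR_add)

lemma homR_mono: "valid_mon n k \<Longrightarrow> homR n (mdeg k) (mono k)"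
  by (simp add: homR_def Rn_mono supp_mono)

lemma homR_zscale_mono: "c \<in> Rn n \<Longrightarrow> k \<in> supp c \<Longrightarrow> homR n (mdeg k) (zscale (c k) (mono k))"
  by (intro homR_zscale homR_mono Rn_valid_mon)

lemma homR_Rn: "homR n d c \<Longrightarrow> c \<in> Rn n" by (simp add: homR_def)
lemma homR_supp: "homR n d c \<Longrightarrow> m \<in> supp c \<Longrightarrow> mdeg m = d" by (simp add: homR_def)

lemma homR_rmul:
  assumes f: "homR n d f" and g: "homR n e g"
  shows "homR n (fst d + fst e, snd d + snd e) (rmul f g)"
  unfolding homR_def
proof (intro conjI ballI)
  have R: "f \<in> Rn n" "g \<in> Rn n" using f g by (simp_all add: homR_def)
  then show "rmul f g \<in> Rn n" by (rule Rn_rmul)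
  fix m assume "m \<in> supp (rmul f g)"
  then obtain k1 k2 where k: "k1 \<in> supp f" "k2 \<in> supp g" "snd k1 \<inter> snd k2 = {}" "m = mon_add k1 k2"
    by (blast dest: supp_rmul)
  then show "mdeg m = (fst d + fst e, snd d + snd e)"
    using mdeg_mon_add[OF Rn_valid_mon[OF R(1) k(1)] Rn_valid_mon[OF R(2) k(2)] k(3)]
      homR_supp[OF f k(1)] homR_supp[OF g k(2)]
    by simp
qed

lemma homR_rone: "homR n (0, 0) rone"
  using homR_mono[OF valid_mon_one, of n] by (simp add: rone_def mdeg_def)

lemma homR_parity:
  assumes "homR n d f" "m \<in> supp f"
  shows "(-1) ^ card (snd m) = ((-1) ^ par d :: int)"
proof -
  have "snd d = 2 * int (card (snd m))"
    using homR_supp[OF assms] by (auto simp: mdeg_def)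
  then show ?thesis by (simp add: par_def neg_one_power_nat_mod_two)
qed

lemma homR_ptwist:
  assumes y: "homR n d y"
  shows "ptwist p y = zscale ((-1) ^ (p * par d)) y"
proof (rule ext)
  fix m
  show "ptwist p y m = zscale ((-1) ^ (p * par d)) y m"
  proof (cases "m \<in> supp y")
    case True
    have "(-1::int) ^ (p * card (snd m)) = ((-1) ^ card (snd m)) ^ p"
      by (simp add: power_mult[symmetric] mult.commute)
    also have "\<dots> = (-1) ^ (p * par d)"
      using homR_parity[OF y True] by (simp add: power_mult[symmetric] mult.commute)
    finally show ?thesis by (simp add: ptwist_def zscale_def)
  qed (simp add: ptwist_def zscale_def supp_def)
qed

lemma lin_eq_sum_over:
  assumes "finite A" "supp c \<subseteq> A"
  shows "lin F c = (\<Sum>k\<in>A. zscale (c k) (F k))"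
proof (rule ext)
  fix m
  have "lin F c m = (\<Sum>k\<in>A. c k * F k m)"
    unfolding lin_def using assms by (intro sum.mono_neutral_left) (auto simp: supp_def)
  then show "lin F c m = (\<Sum>k\<in>A. zscale (c k) (F k)) m" by (simp add: sum_apply zscale_def)
qed

lemma lin_mono: "lin F (mono k) = F k"
  using lin_eq_sum_over[of "{k}" "mono k" F] by (simp add: supp_mono) (simp add: mono_def zscale_one)

lemma zlinear_lin: "zlinear n (lin F)"
  unfolding zlinear_def
proof (intro conjI ballI allI)
  fix c d assume "c \<in> Rn n" "d \<in> Rn n"
  then have f: "finite (supp c \<union> supp d)" by (simp add: Rn_finite_supp)
  have "supp (c + d) \<subseteq> supp c \<union> supp d" by (auto simp: supp_def)
  then show "lin F (c + d) = lin F c + lin F d"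
    by (simp add: lin_eq_sum_over[OF f] sum.distrib[symmetric] zscale_add_left)
next
  fix k c assume "c \<in> Rn n"
  then have f: "finite (supp c)" by (simp add: Rn_finite_supp)
  show "lin F (zscale k c) = zscale k (lin F c)"
    by (simp add: lin_eq_sum_over[OF f supp_zscale] lin_eq_sum_over[OF f subset_refl] zscale_sum
        zscale_zscale) (simp add: zscale_def)
qed

lemma Rn_lin: "(\<And>k. valid_mon n k \<Longrightarrow> F k \<in> Rn n) \<Longrightarrow> c \<in> Rn n \<Longrightarrow> lin F c \<in> Rn n"
  by (simp add: lin_eq_sum_over[OF Rn_finite_supp subset_refl] Rn_sum Rn_zscale Rn_valid_mon)

lemma homR_lin:
  assumes F: "\<And>k. valid_mon n k \<Longrightarrow> homR n (g (mdeg k)) (F k)" and c: "homR n d c"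
  shows "homR n (g d) (lin F c)"
proof -
  have R: "c \<in> Rn n" using c by (rule homR_Rn)
  show ?thesis
    unfolding lin_eq_sum_over[OF Rn_finite_supp[OF R] subset_refl]
    using F homR_supp[OF c] Rn_valid_mon[OF R] by (intro homR_sum homR_zscale) metis
qed

section \<open>The simple reflections s_i\<close>

definition xdiff :: "nat \<Rightarrow> elt" where "xdiff i = xvar i - xvar (i + 1)"

definition unit_exp :: "nat \<Rightarrow> nat \<Rightarrow> nat" where "unit_exp j = (\<lambda>l. if l = j then 1 else 0)"

lemma xvar_eq: "xvar j = mono (unit_exp j, {})" by (simp add: xvar_def unit_exp_def)

lemma valid_unit_exp: "j \<in> {1..n} \<Longrightarrow> valid_mon n (unit_exp j, {})"
  by (simp add: valid_mon_def unit_exp_def)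

lemma Rn_xvar: "j \<in> {1..n} \<Longrightarrow> xvar j \<in> Rn n" by (simp add: xvar_eq Rn_mono valid_unit_exp)

lemma Rn_xdiff: "1 \<le> i \<Longrightarrow> i < n \<Longrightarrow> xdiff i \<in> Rn n" by (simp add: xdiff_def Rn_diff Rn_xvar)

definition mon_bump :: "nat \<Rightarrow> mon \<Rightarrow> mon" where "mon_bump j k = ((fst k)(j := fst k j + 1), snd k)"

lemma xvar_mul_mono: "rmul (xvar j) (mono k) = mono (mon_bump j k)"
proof -
  have "mon_add (unit_exp j, {}) k = mon_bump j k"
    by (simp add: mon_add_def mon_bump_def unit_exp_def fun_eq_iff)
  then show ?thesis by (simp add: xvar_eq rmul_mono mon_mul_def wsign_def zscale_one)
qed

lemma xdiff_mul_mono: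
  assumes "1 \<le> i" "i < n" "valid_mon n k"
  shows "rmul (xdiff i) (mono k) = mono (mon_bump i k) - mono (mon_bump (i + 1) k)"
  using assms rmul_diff_left[OF Rn_xvar Rn_xvar Rn_mono, of i n "i + 1" k]
  by (simp add: xdiff_def xvar_mul_mono)

lemma homR_xdiff: "1 \<le> i \<Longrightarrow> i < n \<Longrightarrow> homR n (2, 0) (xdiff i)"
  using homR_mono[OF valid_unit_exp, of i n] homR_mono[OF valid_unit_exp, of "i + 1" n]
    mdeg_valid_mon[OF valid_unit_exp, of i n] mdeg_valid_mon[OF valid_unit_exp, of "i + 1" n]
  by (auto simp: xdiff_def xvar_eq xdeg_def unit_exp_def intro!: homR_diff)

lemma xdiff_commute: "1 \<le> i \<Longrightarrow> i < n \<Longrightarrow> h \<in> Rn n \<Longrightarrow> rmul h (xdiff i) = rmul (xdiff i) h"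
  using rmul_supercommute[of "xdiff i" n 0 h] homR_parity[OF homR_xdiff, of i n] Rn_xdiff[of i n]
  by (simp add: par_def ptwist_0)

lemma ptwist_xdiff: "1 \<le> i \<Longrightarrow> i < n \<Longrightarrow> ptwist p (xdiff i) = xdiff i"
  using homR_ptwist[OF homR_xdiff, of i n p] by (simp add: par_def zscale_one)

lemma swapexp_add: "swapexp i (\<lambda>j. a j + b j) = (\<lambda>j. swapexp i a j + swapexp i b j)"
  by (simp add: swapexp_def)

lemma xdeg_swapexp:
  assumes "1 \<le> i" "i < n"
  shows "xdeg n (swapexp i a) = xdeg n a"
  unfolding xdeg_def swapexp_def
proof -
  let ?t = "\<lambda>l. if l = i then i + 1 else if l = i + 1 then i else l"
  show "(\<Sum>j = 1..n. a (?t j)) = (\<Sum>j = 1..n. a j)"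
    by (rule sum.reindex_bij_witness[of _ ?t ?t]) (use assms in auto)
qed

definition swap_mon :: "nat \<Rightarrow> mon \<Rightarrow> mon" where
  "swap_mon i k = (swapexp i (fst k), snd k)"

definition shift_mon :: "nat \<Rightarrow> mon \<Rightarrow> mon" where
  "shift_mon i k = (swapexp i (fst k), insert (i + 1) (snd k - {i}))"

definition shiftable :: "nat \<Rightarrow> nat set \<Rightarrow> bool" where
  "shiftable i S \<longleftrightarrow> i \<in> S \<and> i + 1 \<notin> S"

lemma simg_eq: "simg i k = mono (swap_mon i k) +
    (if shiftable i (snd k) then rmul (xdiff i) (mono (shift_mon i k)) else 0)"
  unfolding simg_def Let_def radd_eq rneg_eq rzero_eq xdiff_def[unfolded diff_conv_add_uminus, symmetric]
  by (simp add: swap_mon_def shift_mon_def shiftable_def)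

lemma snd_swap_mon: "snd (swap_mon i k) = snd k" by (simp add: swap_mon_def)
lemma snd_shift_mon: "snd (shift_mon i k) = insert (i + 1) (snd k - {i})" by (simp add: shift_mon_def)

lemma valid_swap_mon: "1 \<le> i \<Longrightarrow> i < n \<Longrightarrow> valid_mon n k \<Longrightarrow> valid_mon n (swap_mon i k)"
  by (auto simp: swap_mon_def valid_mon_def swapexp_def)

lemma valid_shift_mon: "1 \<le> i \<Longrightarrow> i < n \<Longrightarrow> valid_mon n k \<Longrightarrow> valid_mon n (shift_mon i k)"
  by (auto simp: shift_mon_def valid_mon_def swapexp_def)

lemma Rn_simg: "1 \<le> i \<Longrightarrow> i < n \<Longrightarrow> valid_mon n k \<Longrightarrow> simg i k \<in> Rn n"
  by (simp add: simg_eq Rn_add Rn_mono valid_swap_mon Rn_rmul Rn_xdiff valid_shift_mon Rn_zero)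

lemma mdeg_swap_mon: "1 \<le> i \<Longrightarrow> i < n \<Longrightarrow> valid_mon n k \<Longrightarrow> mdeg (swap_mon i k) = mdeg k"
  using mdeg_valid_mon[OF valid_swap_mon] mdeg_valid_mon[of n k] xdeg_swapexp
  by (simp add: swap_mon_def)

lemma mdeg_shift_mon:
  assumes i: "1 \<le> i" "i < n" and v: "valid_mon n k" and P: "shiftable i (snd k)"
  shows "mdeg (shift_mon i k) = (fst (mdeg k) - 2, snd (mdeg k))"
proof -
  let ?S = "snd k"
  have f: "finite ?S" using v by (rule valid_mon_finite)
  have "(\<Sum>j\<in>snd (shift_mon i k). 2 * int j) = 2 * int (i + 1) + (\<Sum>j\<in>?S - {i}. 2 * int j)"
    using P f by (simp add: shift_mon_def shiftable_def)
  moreover have "(\<Sum>j\<in>?S. 2 * int j) = 2 * int i + (\<Sum>j\<in>?S - {i}. 2 * int j)"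
    using sum.remove[OF f, of i "\<lambda>j. 2 * int j"] P by (simp add: shiftable_def)
  moreover have "card (snd (shift_mon i k)) = card ?S"
    using P f by (simp add: shift_mon_def shiftable_def card_insert_if card_Diff_singleton)
      (metis card_gt_0_iff empty_iff Suc_pred)
  ultimately show ?thesis
    using mdeg_valid_mon[OF valid_shift_mon[OF i v]] mdeg_valid_mon[OF v] xdeg_swapexp[OF i]
    by (simp add: shift_mon_def)
qed

lemma homR_simg:
  assumes i: "1 \<le> i" "i < n" and v: "valid_mon n k"
  shows "homR n (mdeg k) (simg i k)"
proof -
  have "homR n (mdeg k) (mono (swap_mon i k))"
    using homR_mono[OF valid_swap_mon[OF i v]] mdeg_swap_mon[OF i v] by simp
  moreover have "homR n (mdeg k) (rmul (xdiff i) (mono (shift_mon i k)))" if "shiftable i (snd k)"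
    using homR_rmul[OF homR_xdiff[OF i] homR_mono[OF valid_shift_mon[OF i v]]]
      mdeg_shift_mon[OF i v that] by simp
  ultimately show ?thesis unfolding simg_eq by (auto intro: homR_add homR_zero)
qed

lemma zlinear_sact: "zlinear n (sact i)"
  unfolding sact_def[abs_def] by (rule zlinear_lin)

lemma Rn_sact: "1 \<le> i \<Longrightarrow> i < n \<Longrightarrow> c \<in> Rn n \<Longrightarrow> sact i c \<in> Rn n"
  unfolding sact_def by (rule Rn_lin[OF Rn_simg])

lemma sact_mono: "sact i (mono k) = simg i k" by (simp add: sact_def lin_mono)

lemma sact_rone: "sact i rone = rone"
proof -
  have "swap_mon i (\<lambda>_. 0, {}) = (\<lambda>_. 0, {})" by (simp add: swap_mon_def swapexp_def)
  then show ?thesis by (simp add: rone_def sact_mono simg_eq shiftable_def)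
qed

lemma par_mdeg: "(-1::int) ^ (p * par (mdeg k)) = (-1) ^ (p * card (snd k))"
proof -
  have "(-1::int) ^ par (mdeg k) = (-1) ^ card (snd k)"
    by (simp add: par_def mdeg_def neg_one_power_nat_mod_two)
  then show ?thesis unfolding mult.commute[of p] power_mult by simp
qed

lemma sact_ptwist:
  assumes i: "1 \<le> i" "i < n" and c: "c \<in> Rn n"
  shows "sact i (ptwist p c) = ptwist p (sact i c)"
proof (rule zlinear_eqI[of n "\<lambda>c. sact i (ptwist p c)" "\<lambda>c. ptwist p (sact i c)", OF _ _ _ c])
  show "zlinear n (\<lambda>c. sact i (ptwist p c))" by (rule zlinear_comp[OF zlinear_sact zlinear_ptwist Rn_ptwist])
  show "zlinear n (\<lambda>c. ptwist p (sact i c))" by (rule zlinear_comp[OF zlinear_ptwist zlinear_sact Rn_sact[OF i]])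
  fix k assume v: "valid_mon n k"
  have "sact i (ptwist p (mono k)) = zscale ((-1) ^ (p * card (snd k))) (simg i k)"
    unfolding ptwist_mono zlinear_zscale[OF zlinear_sact Rn_mono[OF v]] sact_mono ..
  also have "\<dots> = ptwist p (simg i k)"
    unfolding homR_ptwist[OF homR_simg[OF i v], of p] par_mdeg ..
  finally show "sact i (ptwist p (mono k)) = ptwist p (sact i (mono k))" by (simp add: sact_mono)
qed

lemma inversions_singleton_left: "inversions {x} T = card {t \<in> T. t < x}"
proof -
  have "{(a, b). a \<in> {x} \<and> b \<in> T \<and> b < a} = Pair x ` {t \<in> T. t < x}" by auto
  then show ?thesis by (simp add: inversions_def card_image inj_on_def)
qed

lemma inversions_singleton_right: "inversions S {y} = card {s \<in> S. y < s}"
proof -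
  have "{(a, b). a \<in> S \<and> b \<in> {y} \<and> b < a} = (\<lambda>s. (s, y)) ` {s \<in> S. y < s}" by auto
  moreover have "inj_on (\<lambda>s. (s, y)) {s \<in> S. y < s}" by (auto simp: inj_on_def)
  ultimately show ?thesis by (simp add: inversions_def card_image)
qed

lemma inversions_insert_left:
  "finite A \<Longrightarrow> finite T \<Longrightarrow> x \<notin> A \<Longrightarrow> inversions (insert x A) T = inversions A T + card {t \<in> T. t < x}"
  using inversions_Un_left[of "{x}" A T] inversions_singleton_left[of x T] by simp

lemma inversions_insert_right:
  "finite S \<Longrightarrow> finite B \<Longrightarrow> y \<notin> B \<Longrightarrow> inversions S (insert y B) = inversions S B + card {s \<in> S. y < s}"
  using inversions_Un_right[of S "{y}" B] inversions_singleton_right[of S y] by simp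

lemma wsign_shift_left:
  assumes f: "finite S" "finite T" and h: "i \<in> S" "i + 1 \<notin> S" "i \<notin> T" "i + 1 \<notin> T"
  shows "wsign (insert (i + 1) (S - {i})) T = wsign S T"
proof -
  have "{t \<in> T. t < i + 1} = {t \<in> T. t < i}" using h by (auto simp: less_Suc_eq)
  moreover have "inversions S T = inversions (S - {i}) T + card {t \<in> T. t < i}"
    using f h inversions_insert_left[of "S - {i}" T i] insert_Diff[OF h(1)] by simp
  ultimately show ?thesis
    using f h by (simp add: wsign_inversions inversions_insert_left)
qed

lemma wsign_shift_right:
  assumes f: "finite S" "finite T" and h: "i \<in> T" "i + 1 \<notin> T" "i \<notin> S" "i + 1 \<notin> S"
  shows "wsign S (insert (i + 1) (T - {i})) = wsign S T"
proof -
  have "{s \<in> S. i + 1 < s} = {s \<in> S. i < s}" using h by auto (metis Suc_lessI Suc_eq_plus1)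
  moreover have "inversions S T = inversions S (T - {i}) + card {s \<in> S. i < s}"
    using f h inversions_insert_right[of S "T - {i}" i] insert_Diff[OF h(1)] by simp
  ultimately show ?thesis
    using f h by (simp add: wsign_inversions inversions_insert_right)
qed

lemma wsign_shift_both:
  assumes f: "finite S" "finite T" and h: "i \<in> S" "i \<in> T" "i + 1 \<notin> S" "i + 1 \<notin> T"
  shows "wsign S (insert (i + 1) (T - {i})) = - wsign (insert (i + 1) (S - {i})) T"
proof -
  let ?S0 = "S - {i}" and ?T0 = "T - {i}"
  have f0: "finite ?S0" "finite ?T0" using f by auto
  have "inversions S (insert (i + 1) ?T0) =
      inversions ?S0 ?T0 + card {s \<in> ?S0. i + 1 < s} + card {t \<in> insert (i + 1) ?T0. t < i}"
    using inversions_insert_left[of ?S0 "insert (i + 1) ?T0" i] inversions_insert_right[of ?S0 ?T0 "i + 1"]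
      f0 h insert_Diff[OF h(1)] by simp
  moreover have "inversions (insert (i + 1) ?S0) T =
      inversions ?S0 ?T0 + card {s \<in> ?S0. i < s} + card {t \<in> T. t < i + 1}"
    using inversions_insert_left[of ?S0 T "i + 1"] inversions_insert_right[of ?S0 ?T0 i]
      f0 f h insert_Diff[OF h(2)] by simp
  moreover have "{s \<in> ?S0. i + 1 < s} = {s \<in> ?S0. i < s}" using h by auto (metis Suc_lessI Suc_eq_plus1)
  moreover have "{t \<in> insert (i + 1) ?T0. t < i} = {t \<in> ?T0. t < i}" by auto
  moreover have "card {t \<in> T. t < i + 1} = card {t \<in> ?T0. t < i} + 1"
  proof -
    have "{t \<in> T. t < i + 1} = insert i {t \<in> ?T0. t < i}" using h by (auto simp: less_Suc_eq)
    then show ?thesis using f0 by simp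
  qed
  ultimately have "inversions (insert (i + 1) ?S0) T = inversions S (insert (i + 1) ?T0) + 1"
    by simp
  then show ?thesis by (simp add: wsign_inversions)
qed

lemma mon_add_swap_mon: "mon_add (swap_mon i k1) (swap_mon i k2) = swap_mon i (mon_add k1 k2)"
  by (simp add: mon_add_def swap_mon_def swapexp_add)

lemma mon_add_shift_swap: "i \<notin> snd k2 \<Longrightarrow> mon_add (shift_mon i k1) (swap_mon i k2) = shift_mon i (mon_add k1 k2)"
  by (auto simp: mon_add_def swap_mon_def shift_mon_def swapexp_add)

lemma mon_add_swap_shift: "i \<notin> snd k1 \<Longrightarrow> mon_add (swap_mon i k1) (shift_mon i k2) = shift_mon i (mon_add k1 k2)"
  by (auto simp: mon_add_def swap_mon_def shift_mon_def swapexp_add)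

lemma mon_add_shift_commute:
  "i \<in> snd k1 \<Longrightarrow> i \<in> snd k2 \<Longrightarrow> mon_add (swap_mon i k1) (shift_mon i k2) = mon_add (shift_mon i k1) (swap_mon i k2)"
  by (auto simp: mon_add_def swap_mon_def shift_mon_def swapexp_add)

text \<open>The two cross terms in the product s_i(k1) s_i(k2), with the common factor
  x_i - x_(i+1) removed.\<close>

definition shift_cross :: "nat \<Rightarrow> mon \<Rightarrow> mon \<Rightarrow> elt" where
  "shift_cross i k1 k2 =
     (if shiftable i (snd k2) then mon_mul (swap_mon i k1) (shift_mon i k2) else 0) +
     (if shiftable i (snd k1) then mon_mul (shift_mon i k1) (swap_mon i k2) else 0)"

lemma shift_cross_both:
  assumes f: "finite (snd k1)" "finite (snd k2)" and i: "i \<in> snd k1" "i \<in> snd k2"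
  shows "shift_cross i k1 k2 = 0"
proof (cases "shiftable i (snd k1) \<and> shiftable i (snd k2) \<and> (snd k1 - {i}) \<inter> (snd k2 - {i}) = {}")
  case True
  have "snd (swap_mon i k1) \<inter> snd (shift_mon i k2) = {}" "snd (shift_mon i k1) \<inter> snd (swap_mon i k2) = {}"
    using True by (auto simp: snd_swap_mon snd_shift_mon shiftable_def)
  moreover have "wsign (snd k1) (insert (Suc i) (snd k2 - {i})) = - wsign (insert (Suc i) (snd k1 - {i})) (snd k2)"
    using wsign_shift_both[OF f] i True by (auto simp: shiftable_def)
  ultimately show ?thesis
    using True by (simp add: shift_cross_def mon_mul_disjoint snd_swap_mon snd_shift_mon
        mon_add_shift_commute[OF i] zscale_def fun_eq_iff)
next
  case False
  have "mon_mul (swap_mon i k1) (shift_mon i k2) = 0" if "shiftable i (snd k2)"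
    using False i that by (auto intro!: mon_mul_overlap simp: snd_swap_mon snd_shift_mon shiftable_def)
  moreover have "mon_mul (shift_mon i k1) (swap_mon i k2) = 0" if "shiftable i (snd k1)"
    using False i that by (auto intro!: mon_mul_overlap simp: snd_swap_mon snd_shift_mon shiftable_def)
  ultimately show ?thesis by (simp add: shift_cross_def)
qed

lemma shift_cross_left:
  assumes f: "finite (snd k1)" "finite (snd k2)" and i: "i \<in> snd k1" "i \<notin> snd k2"
  shows "shift_cross i k1 k2 = (if snd k1 \<inter> snd k2 = {} \<and> shiftable i (snd (mon_add k1 k2))
    then zscale (wsign (snd k1) (snd k2)) (mono (shift_mon i (mon_add k1 k2))) else 0)"
proof (cases "shiftable i (snd k1) \<and> i + 1 \<notin> snd k2 \<and> snd k1 \<inter> snd k2 = {}")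
  case True
  have "wsign (insert (Suc i) (snd k1 - {i})) (snd k2) = wsign (snd k1) (snd k2)"
    using wsign_shift_left[OF f] True i by (auto simp: shiftable_def)
  moreover have "snd (shift_mon i k1) \<inter> snd (swap_mon i k2) = {}"
    using True by (auto simp: snd_swap_mon snd_shift_mon)
  ultimately show ?thesis
    using True i by (simp add: shift_cross_def shiftable_def mon_mul_disjoint snd_mon_add
        snd_shift_mon snd_swap_mon mon_add_shift_swap)
next
  case False
  then show ?thesis
    using i by (auto simp: shift_cross_def shiftable_def snd_mon_add snd_swap_mon snd_shift_mon
        intro!: mon_mul_overlap)
qed

lemma shift_cross_right:
  assumes f: "finite (snd k1)" "finite (snd k2)" and i: "i \<notin> snd k1" "i \<in> snd k2"
  shows "shift_cross i k1 k2 = (if snd k1 \<inter> snd k2 = {} \<and> shiftable i (snd (mon_add k1 k2))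
    then zscale (wsign (snd k1) (snd k2)) (mono (shift_mon i (mon_add k1 k2))) else 0)"
proof (cases "shiftable i (snd k2) \<and> i + 1 \<notin> snd k1 \<and> snd k1 \<inter> snd k2 = {}")
  case True
  have "wsign (snd k1) (insert (Suc i) (snd k2 - {i})) = wsign (snd k1) (snd k2)"
    using wsign_shift_right[OF f] True i by (auto simp: shiftable_def)
  moreover have "snd (swap_mon i k1) \<inter> snd (shift_mon i k2) = {}"
    using True by (auto simp: snd_swap_mon snd_shift_mon)
  ultimately show ?thesis
    using True i by (simp add: shift_cross_def shiftable_def mon_mul_disjoint snd_mon_add
        snd_shift_mon snd_swap_mon mon_add_swap_shift)
next
  case False
  then show ?thesis
    using i by (auto simp: shift_cross_def shiftable_def snd_mon_add snd_swap_mon snd_shift_mon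
        intro!: mon_mul_overlap)
qed

lemma shift_cross_eq:
  assumes "finite (snd k1)" "finite (snd k2)"
  shows "shift_cross i k1 k2 = (if snd k1 \<inter> snd k2 = {} \<and> shiftable i (snd (mon_add k1 k2))
    then zscale (wsign (snd k1) (snd k2)) (mono (shift_mon i (mon_add k1 k2))) else 0)"
  using shift_cross_both[OF assms] shift_cross_left[OF assms] shift_cross_right[OF assms]
  by (cases "i \<in> snd k1"; cases "i \<in> snd k2") (auto simp: shift_cross_def shiftable_def snd_mon_add)

lemma rmul_left_commute_xdiff:
  assumes i: "1 \<le> i" "i < n" and "X \<in> Rn n" "Z \<in> Rn n"
  shows "rmul X (rmul (xdiff i) Z) = rmul (xdiff i) (rmul X Z)"
  using assms rmul_assoc[OF _ Rn_xdiff[OF i]] rmul_assoc[OF Rn_xdiff[OF i]] xdiff_commute[OF i]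
  by metis

lemma simg_mul_simg:
  assumes i: "1 \<le> i" "i < n" and v1: "valid_mon n k1" and v2: "valid_mon n k2"
  shows "rmul (simg i k1) (simg i k2) =
    mon_mul (swap_mon i k1) (swap_mon i k2) + rmul (xdiff i) (shift_cross i k1 k2)"
proof -
  define D where "D = xdiff i"
  define M1 where "M1 = mono (swap_mon i k1)"
  define M2 where "M2 = mono (swap_mon i k2)"
  define N1 where "N1 = mono (shift_mon i k1)"
  define N2 where "N2 = mono (shift_mon i k2)"
  define E1 where "E1 = (if shiftable i (snd k1) then rmul D N1 else 0)"
  define E2 where "E2 = (if shiftable i (snd k2) then rmul D N2 else 0)"
  have R: "M1 \<in> Rn n" "M2 \<in> Rn n" "N1 \<in> Rn n" "N2 \<in> Rn n" "D \<in> Rn n"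
    unfolding M1_def M2_def N1_def N2_def D_def using i v1 v2
    by (simp_all add: Rn_mono valid_swap_mon valid_shift_mon Rn_xdiff)
  have RE: "E1 \<in> Rn n" "E2 \<in> Rn n" unfolding E1_def E2_def using R by (simp_all add: Rn_rmul Rn_zero)
  have swap: "rmul X (rmul D Z) = rmul D (rmul X Z)" if "X \<in> Rn n" "Z \<in> Rn n" for X Z
    unfolding D_def by (rule rmul_left_commute_xdiff[OF i that])
  have "rmul M1 E2 = (if shiftable i (snd k2) then rmul D (mon_mul (swap_mon i k1) (shift_mon i k2)) else 0)"
    unfolding E2_def using swap[OF R(1) R(4)] by (simp add: rmul_zero_right M1_def N2_def rmul_mono)
  moreover have "rmul E1 M2 = (if shiftable i (snd k1) then rmul D (mon_mul (shift_mon i k1) (swap_mon i k2)) else 0)"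
    unfolding E1_def using rmul_assoc[OF R(5) R(3) R(2)] by (simp add: rmul_zero_left M2_def N1_def rmul_mono)
  moreover have "rmul E1 E2 = 0"
  proof (cases "shiftable i (snd k1) \<and> shiftable i (snd k2)")
    case True
    \<comment> \<open>both shifted monomials contain omega_(i+1)\<close>
    have "rmul N1 N2 = 0" unfolding N1_def N2_def rmul_mono
      by (rule mon_mul_overlap) (auto simp: snd_shift_mon)
    moreover have "rmul E1 E2 = rmul D (rmul D (rmul N1 N2))"
      using True rmul_assoc[OF R(5) R(3) Rn_rmul[OF R(5) R(4)]] swap[OF R(3) R(4)]
      by (simp add: E1_def E2_def)
    ultimately show ?thesis by (simp add: rmul_zero_right)
  qed (auto simp: E1_def E2_def rmul_zero_left rmul_zero_right)
  moreover have "simg i k1 = M1 + E1" "simg i k2 = M2 + E2"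
    unfolding simg_eq M1_def E1_def M2_def E2_def D_def N1_def N2_def by simp_all
  moreover have "mon_mul (swap_mon i k1) (shift_mon i k2) \<in> Rn n"
    "mon_mul (shift_mon i k1) (swap_mon i k2) \<in> Rn n"
    using i v1 v2 by (simp_all add: Rn_mon_mul valid_swap_mon valid_shift_mon)
  ultimately show ?thesis
    using R RE by (simp add: rmul_add_left rmul_add_right Rn_add Rn_zero rmul_zero_right
        shift_cross_def M1_def M2_def rmul_mono D_def)
qed

lemma sact_mon_mul:
  assumes i: "1 \<le> i" "i < n" and v1: "valid_mon n k1" and v2: "valid_mon n k2"
  shows "sact i (mon_mul k1 k2) = rmul (simg i k1) (simg i k2)"
proof (cases "snd k1 \<inter> snd k2 = {}")
  case True
  let ?w = "wsign (snd k1) (snd k2)" and ?k = "mon_add k1 k2"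
  have v: "valid_mon n ?k" using v1 v2 by (rule valid_mon_add)
  have "sact i (mon_mul k1 k2) = zscale ?w (simg i ?k)"
    using True zlinear_zscale[OF zlinear_sact Rn_mono[OF v]] by (simp add: mon_mul_disjoint sact_mono)
  also have "\<dots> = mon_mul (swap_mon i k1) (swap_mon i k2) +
      rmul (xdiff i) (if shiftable i (snd ?k) then zscale ?w (mono (shift_mon i ?k)) else 0)"
    using True rmul_zscale_right[OF Rn_xdiff[OF i] Rn_mono[OF valid_shift_mon[OF i v]]]
    by (simp add: simg_eq zscale_add mon_mul_disjoint snd_swap_mon mon_add_swap_mon
        zscale_zero_right rmul_zero_right)
  also have "\<dots> = rmul (simg i k1) (simg i k2)"
    using True by (simp add: simg_mul_simg[OF i v1 v2] shift_cross_eq[OF valid_mon_finite[OF v1] valid_mon_finite[OF v2]])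
  finally show ?thesis .
next
  case False
  then show ?thesis
    by (simp add: simg_mul_simg[OF i v1 v2] shift_cross_eq[OF valid_mon_finite[OF v1] valid_mon_finite[OF v2]] mon_mul_overlap
        snd_swap_mon rmul_zero_right zlinear_zero[OF zlinear_sact])
qed

lemma sact_rmul:
  assumes i: "1 \<le> i" "i < n" and "c \<in> Rn n" "d \<in> Rn n"
  shows "sact i (rmul c d) = rmul (sact i c) (sact i d)"
proof (rule zbilinear_eqI[of n "\<lambda>c d. sact i (rmul c d)" "\<lambda>c d. rmul (sact i c) (sact i d)",
      OF _ _ _ assms(3,4)])
  fix k1 k2 assume "valid_mon n k1" "valid_mon n k2"
  then show "sact i (rmul (mono k1) (mono k2)) = rmul (sact i (mono k1)) (sact i (mono k2))"
    by (simp add: rmul_mono sact_mono sact_mon_mul[OF i])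
next
  fix d assume d: "d \<in> Rn n"
  show "zlinear n (\<lambda>c. sact i (rmul c d)) \<and> zlinear n (\<lambda>c. rmul (sact i c) (sact i d))"
    by (simp add: zlinear_comp[OF zlinear_sact zlinear_rmul_left[OF d] Rn_rmul[OF _ d]]
        zlinear_comp[OF zlinear_rmul_left[OF Rn_sact[OF i d]] zlinear_sact Rn_sact[OF i]])
next
  fix c assume c: "c \<in> Rn n"
  show "zlinear n (\<lambda>d. sact i (rmul c d)) \<and> zlinear n (\<lambda>d. rmul (sact i c) (sact i d))"
    by (simp add: zlinear_comp[OF zlinear_sact zlinear_rmul_right[OF c] Rn_rmul[OF c]]
        zlinear_comp[OF zlinear_rmul_right[OF Rn_sact[OF i c]] zlinear_sact Rn_sact[OF i]])
qed

section \<open>Divided differences and the Demazure operators\<close>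

lemma mon_bump_inj: "mon_bump j k = mon_bump j k' \<Longrightarrow> k = k'"
  by (cases k, cases k') (auto simp: mon_bump_def fun_eq_iff split: if_splits)

text \<open>x_i - x_(i+1) is a non-zero-divisor: if k0 maximises the exponent of x_i in the
  support of q, then x_i x^k0 occurs in (x_i - x_(i+1)) q with coefficient q(k0).\<close>

lemma xdiff_mul_eq_zero:
  assumes i: "1 \<le> i" "i < n" and q: "q \<in> Rn n" and z: "rmul (xdiff i) q = 0"
  shows "q = 0"
proof (rule ccontr)
  assume "q \<noteq> 0"
  then have ne: "supp q \<noteq> {}" by (auto simp: supp_def fun_eq_iff)
  have f: "finite (supp q)" using q by (rule Rn_finite_supp)
  let ?f = "\<lambda>k. fst k i"
  have "Max (?f ` supp q) \<in> ?f ` supp q" using f ne by (intro Max_in) auto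
  then obtain k0 where k0: "k0 \<in> supp q" "?f k0 = Max (?f ` supp q)" by auto
  have mx: "?f k \<le> ?f k0" if "k \<in> supp q" for k using k0(2) f that by simp
  let ?m = "mon_bump i k0"
  have "rmul (xdiff i) q ?m =
      (\<Sum>k\<in>supp q. q k * (mono (mon_bump i k) ?m - mono (mon_bump (i + 1) k) ?m))"
    using zlinear_expansion[OF zlinear_rmul_right[OF Rn_xdiff[OF i]] q]
    by (simp add: xdiff_mul_mono[OF i Rn_valid_mon[OF q]] sum_apply zscale_def cong: sum.cong)
  also have "\<dots> = (\<Sum>k\<in>supp q. if k = k0 then q k0 else 0)"
  proof (rule sum.cong[OF refl])
    fix k assume k: "k \<in> supp q"
    have "mon_bump (i + 1) k \<noteq> ?m"
    proof
      assume "mon_bump (i + 1) k = ?m"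
      then have "fst (mon_bump (i + 1) k) i = fst ?m i" by simp
      then have "?f k = ?f k0 + 1" by (simp add: mon_bump_def)
      with mx[OF k] show False by simp
    qed
    then show "q k * (mono (mon_bump i k) ?m - mono (mon_bump (i + 1) k) ?m) = (if k = k0 then q k0 else 0)"
      by (auto simp: mono_def dest: mon_bump_inj)
  qed
  also have "\<dots> = q k0" using f k0(1) by simp
  finally show False using z k0(1) by (simp add: supp_def)
qed

lemma xdiff_mul_cancel:
  assumes i: "1 \<le> i" "i < n" and "g \<in> Rn n" "g' \<in> Rn n" "rmul (xdiff i) g = rmul (xdiff i) g'"
  shows "g = g'"
  using assms xdiff_mul_eq_zero[OF i Rn_diff, of g g'] rmul_diff_right[OF Rn_xdiff[OF i], of g g']
  by simp

text \<open>The quotient (x_i^N - x_(i+1)^N) x^b omega_S / (x_i - x_(i+1)), summed as a geometric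
  series.\<close>

primrec telescope :: "nat \<Rightarrow> nat \<Rightarrow> nat set \<Rightarrow> (nat \<Rightarrow> nat) \<Rightarrow> elt" where
  "telescope i 0 S b = 0"
| "telescope i (Suc N) S b = mono (b(i + 1 := b (i + 1) + N), S) + telescope i N S (b(i := b i + 1))"


lemma valid_mon_upd: "valid_mon n (b, S) \<Longrightarrow> j \<in> {1..n} \<Longrightarrow> valid_mon n (b(j := x), S)"
  by (auto simp: valid_mon_def)

lemma Rn_telescope:
  assumes i: "1 \<le> i" "i < n"
  shows "valid_mon n (b, S) \<Longrightarrow> telescope i N S b \<in> Rn n"
proof (induction N arbitrary: b)
  case (Suc N)
  have "valid_mon n (b(i + 1 := b (i + 1) + N), S)" "valid_mon n (b(i := b i + 1), S)"
    using Suc.prems i by (auto intro: valid_mon_upd)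
  then show ?case unfolding telescope.simps(2) by (intro Rn_add Rn_mono Suc.IH)
qed (simp add: Rn_zero)

lemma xdiff_mul_telescope:
  assumes i: "1 \<le> i" "i < n" and "valid_mon n (b, S)"
  shows "rmul (xdiff i) (telescope i N S b) = mono (b(i := b i + N), S) - mono (b(i + 1 := b (i + 1) + N), S)"
  using assms(3)
proof (induction N arbitrary: b)
  case 0 show ?case unfolding telescope.simps(1) rmul_zero_right by simp
next
  case (Suc N)
  let ?b1 = "b(i + 1 := b (i + 1) + N)" and ?b2 = "b(i := b i + 1)"
  have v1: "valid_mon n (?b1, S)" and v2: "valid_mon n (?b2, S)"
    using Suc.prems i by (auto intro: valid_mon_upd)
  have "rmul (xdiff i) (telescope i (Suc N) S b) =
      rmul (xdiff i) (mono (?b1, S)) + rmul (xdiff i) (telescope i N S ?b2)"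
    using rmul_add_right[OF Rn_xdiff[OF i] Rn_mono[OF v1] Rn_telescope[OF i v2]] by (simp only: telescope.simps(2))
  also have "\<dots> = (mono (mon_bump i (?b1, S)) - mono (mon_bump (i + 1) (?b1, S)))
      + (mono (?b2(i := ?b2 i + N), S) - mono (?b2(i + 1 := ?b2 (i + 1) + N), S))"
    by (simp only: xdiff_mul_mono[OF i v1] Suc.IH[OF v2])
  also have "\<dots> = mono (b(i := b i + Suc N), S) - mono (b(i + 1 := b (i + 1) + Suc N), S)"
  proof -
    have "mon_bump i (?b1, S) = (?b2(i + 1 := ?b2 (i + 1) + N), S)"
      "mon_bump (i + 1) (?b1, S) = (b(i + 1 := b (i + 1) + Suc N), S)"
      "(?b2(i := ?b2 i + N), S) = (b(i := b i + Suc N), S)"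
      by (simp_all add: mon_bump_def fun_eq_iff)
    then show ?thesis by (simp add: algebra_simps)
  qed
  finally show ?case .
qed

lemma xdeg_upd: "j \<in> {1..n} \<Longrightarrow> xdeg n (b(j := x)) + b j = xdeg n b + x"
  using sum.remove[of "{1..n}" j "b(j := x)"] sum.remove[of "{1..n}" j b]
  by (simp add: xdeg_def)

lemma homR_telescope:
  assumes i: "1 \<le> i" "i < n" and "valid_mon n (b, S)"
  shows "homR n (2 * int (xdeg n b + N) - 2 - (\<Sum>j\<in>S. 2 * int j), 2 * int (card S)) (telescope i N S b)"
  using assms(3)
proof (induction N arbitrary: b)
  case 0 show ?case unfolding telescope.simps(1) by (rule homR_zero)
next
  case (Suc N)
  let ?b1 = "b(i + 1 := b (i + 1) + N)" and ?b2 = "b(i := b i + 1)"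
  have v1: "valid_mon n (?b1, S)" and v2: "valid_mon n (?b2, S)"
    using Suc.prems i by (auto intro: valid_mon_upd)
  have b1: "xdeg n ?b1 = xdeg n b + N" and b2: "xdeg n ?b2 + N = xdeg n b + Suc N"
    using xdeg_upd[of "i + 1" n b "b (i + 1) + N"] xdeg_upd[of i n b "b i + 1"] i by simp_all
  have "homR n (2 * int (xdeg n b + Suc N) - 2 - (\<Sum>j\<in>S. 2 * int j), 2 * int (card S)) (mono (?b1, S))"
    using homR_mono[OF v1] mdeg_valid_mon[OF v1] b1 by simp
  moreover have "homR n (2 * int (xdeg n b + Suc N) - 2 - (\<Sum>j\<in>S. 2 * int j), 2 * int (card S))
      (telescope i N S ?b2)"
    using Suc.IH[OF v2] unfolding b2 .
  ultimately show ?case unfolding telescope.simps(2) by (rule homR_add)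
qed

text \<open>The divided difference (x^a - x^(s_i a)) omega_S / (x_i - x_(i+1)).\<close>

definition swap_quotient :: "nat \<Rightarrow> mon \<Rightarrow> elt" where
  "swap_quotient i k = (let a = fst k; p = a i; r = a (i + 1) in
     if r \<le> p then telescope i (p - r) (snd k) (a(i := r))
     else - telescope i (r - p) (snd k) (a(i + 1 := p)))"

lemma xdiff_mul_swap_quotient:
  assumes i: "1 \<le> i" "i < n" and v: "valid_mon n (a, S)"
  shows "rmul (xdiff i) (swap_quotient i (a, S)) = mono (a, S) - mono (swap_mon i (a, S))"
proof (cases "a (i + 1) \<le> a i")
  case True
  have vb: "valid_mon n (a(i := a (i + 1)), S)" using v i by (intro valid_mon_upd) auto
  have "(a(i := a (i + 1)))(i := a (i + 1) + (a i - a (i + 1))) = a"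
    "(a(i := a (i + 1)))(i + 1 := a i) = swapexp i a"
    using True by (auto simp: fun_eq_iff swapexp_def)
  then show ?thesis
    using xdiff_mul_telescope[OF i vb, of "a i - a (i + 1)"] True
    by (simp add: swap_quotient_def swap_mon_def Let_def)
next
  case False
  have vb: "valid_mon n (a(i + 1 := a i), S)" using v i by (intro valid_mon_upd) auto
  have "(a(i + 1 := a i))(i := a (i + 1)) = swapexp i a"
    "(a(i + 1 := a i))(i + 1 := a i + (a (i + 1) - a i)) = a"
    using False by (auto simp: fun_eq_iff swapexp_def)
  then show ?thesis
    using xdiff_mul_telescope[OF i vb, of "a (i + 1) - a i"] False
      zlinear_uminus[OF zlinear_rmul_right[OF Rn_xdiff[OF i]] Rn_telescope[OF i vb]]
    by (simp add: swap_quotient_def swap_mon_def Let_def)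
qed

lemma Rn_swap_quotient:
  assumes i: "1 \<le> i" "i < n" and v: "valid_mon n (a, S)"
  shows "swap_quotient i (a, S) \<in> Rn n"
  using Rn_telescope[OF i valid_mon_upd[OF v]] i
  by (simp add: swap_quotient_def Let_def Rn_uminus)

lemma homR_swap_quotient:
  assumes i: "1 \<le> i" "i < n" and v: "valid_mon n (a, S)"
  shows "homR n (fst (mdeg (a, S)) - 2, snd (mdeg (a, S))) (swap_quotient i (a, S))"
proof -
  have md: "mdeg (a, S) = (2 * int (xdeg n a) - (\<Sum>j\<in>S. 2 * int j), 2 * int (card S))"
    using mdeg_valid_mon[OF v] by simp
  have deg: "(2 * int (xdeg n a) - 2 - (\<Sum>j\<in>S. 2 * int j), 2 * int (card S)) =
      (fst (mdeg (a, S)) - 2, snd (mdeg (a, S)))"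
    unfolding md by simp
  show ?thesis
  proof (cases "a (i + 1) \<le> a i")
    case True
    have "xdeg n (a(i := a (i + 1))) + (a i - a (i + 1)) = xdeg n a"
      using xdeg_upd[of i n a "a (i + 1)"] i True by simp
    then show ?thesis
      using homR_telescope[OF i valid_mon_upd[OF v], of i "a (i + 1)" "a i - a (i + 1)"] True i
      by (simp add: swap_quotient_def Let_def deg)
  next
    case False
    have "xdeg n (a(i + 1 := a i)) + (a (i + 1) - a i) = xdeg n a"
      using xdeg_upd[of "i + 1" n a "a i"] i False by simp
    then show ?thesis
      using homR_uminus[OF homR_telescope[OF i valid_mon_upd[OF v], of "i + 1" "a i" "a (i + 1) - a i"]] False i
      by (simp add: swap_quotient_def Let_def deg)
  qed
qed

definition demazure_mon :: "nat \<Rightarrow> mon \<Rightarrow> elt" where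
  "demazure_mon i k = swap_quotient i k - (if shiftable i (snd k) then mono (shift_mon i k) else 0)"

lemma Rn_demazure_mon: "1 \<le> i \<Longrightarrow> i < n \<Longrightarrow> valid_mon n k \<Longrightarrow> demazure_mon i k \<in> Rn n"
  by (cases k) (simp add: demazure_mon_def Rn_diff Rn_swap_quotient Rn_mono valid_shift_mon Rn_zero)

lemma xdiff_mul_demazure_mon:
  assumes i: "1 \<le> i" "i < n" and v: "valid_mon n k"
  shows "rmul (xdiff i) (demazure_mon i k) = mono k - simg i k"
proof -
  have "(if shiftable i (snd k) then mono (shift_mon i k) else 0) \<in> Rn n"
    by (simp add: Rn_mono valid_shift_mon[OF i v] Rn_zero)
  then show ?thesis
    using v rmul_diff_right[OF Rn_xdiff[OF i] Rn_swap_quotient[OF i, of "fst k" "snd k"]]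
      xdiff_mul_swap_quotient[OF i, of "fst k" "snd k"]
    by (simp add: demazure_mon_def simg_eq rmul_zero_right)
qed

lemma homR_demazure_mon:
  "1 \<le> i \<Longrightarrow> i < n \<Longrightarrow> valid_mon n k \<Longrightarrow> homR n (fst (mdeg k) - 2, snd (mdeg k)) (demazure_mon i k)"
  unfolding demazure_mon_def
  using homR_swap_quotient[of i n "fst k" "snd k"] homR_mono[OF valid_shift_mon, of i n k] mdeg_shift_mon[of i n k]
  by (auto intro!: homR_diff simp: homR_zero)

definition demazure :: "nat \<Rightarrow> elt \<Rightarrow> elt" where "demazure i c = lin (demazure_mon i) c"

lemma Rn_demazure: "1 \<le> i \<Longrightarrow> i < n \<Longrightarrow> c \<in> Rn n \<Longrightarrow> demazure i c \<in> Rn n"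
  unfolding demazure_def by (rule Rn_lin[OF Rn_demazure_mon])

lemma xdiff_mul_demazure:
  assumes i: "1 \<le> i" "i < n" and c: "c \<in> Rn n"
  shows "rmul (xdiff i) (demazure i c) = c - sact i c"
proof (rule zlinear_eqI[of n "\<lambda>c. rmul (xdiff i) (demazure i c)" "\<lambda>c. c - sact i c", OF _ _ _ c])
  show "zlinear n (\<lambda>c. rmul (xdiff i) (demazure i c))"
    unfolding demazure_def
    by (rule zlinear_comp[OF zlinear_rmul_right[OF Rn_xdiff[OF i]] zlinear_lin Rn_lin[OF Rn_demazure_mon[OF i]]])
  show "zlinear n (\<lambda>c. c - sact i c)"
    using zlinear_sact[of n i] unfolding zlinear_def by (simp add: zscale_diff algebra_simps)
  fix k assume v: "valid_mon n k"
  show "rmul (xdiff i) (demazure i (mono k)) = mono k - sact i (mono k)"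
    by (simp add: demazure_def lin_mono xdiff_mul_demazure_mon[OF i v] sact_mono)
qed

lemma dem_unique:
  assumes i: "1 \<le> i" "i < n" and c: "c \<in> Rn n" and g: "g \<in> Rn n"
    and "rmul (xdiff i) g = c - sact i c"
  shows "dem n i c = g"
proof -
  have dem_eq: "dem n i c = (THE g. g \<in> Rn n \<and> rmul (xdiff i) g = c - sact i c)"
    unfolding dem_def radd_eq rneg_eq diff_conv_add_uminus[symmetric] xdiff_def ..
  show ?thesis unfolding dem_eq
    using assms xdiff_mul_cancel[OF i] by (intro the_equality) auto
qed

context
  fixes n i :: nat
  assumes i: "1 \<le> i" "i < n"
begin

lemma dem_eq_demazure: "c \<in> Rn n \<Longrightarrow> dem n i c = demazure i c"
  by (rule dem_unique[OF i _ Rn_demazure[OF i] xdiff_mul_demazure[OF i]])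

lemma Rn_dem: "c \<in> Rn n \<Longrightarrow> dem n i c \<in> Rn n"
  by (simp add: dem_eq_demazure Rn_demazure[OF i])

lemma xdiff_mul_dem: "c \<in> Rn n \<Longrightarrow> rmul (xdiff i) (dem n i c) = c - sact i c"
  by (simp add: dem_eq_demazure xdiff_mul_demazure[OF i])

lemma dem_add: "c \<in> Rn n \<Longrightarrow> d \<in> Rn n \<Longrightarrow> dem n i (c + d) = dem n i c + dem n i d"
  by (simp add: dem_eq_demazure Rn_add demazure_def zlinear_add[OF zlinear_lin])

lemma homR_dem: "homR n e c \<Longrightarrow> homR n (fst e - 2, snd e) (dem n i c)"
  unfolding dem_eq_demazure[OF homR_Rn] demazure_def
  by (rule homR_lin[where g = "\<lambda>d. (fst d - 2, snd d)"]) (simp add: homR_demazure_mon[OF i])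

lemma dem_rone: "dem n i rone = 0"
  by (rule dem_unique[OF i Rn_rone Rn_zero]) (simp add: rmul_zero_right sact_rone)

lemma dem_mul_invariant:
  assumes f: "f \<in> Rn n" and fixed: "sact i f = f" and g: "g \<in> Rn n"
  shows "dem n i (rmul f g) = rmul f (dem n i g)"
proof (rule dem_unique[OF i Rn_rmul[OF f g] Rn_rmul[OF f Rn_dem[OF g]]])
  have "rmul (xdiff i) (rmul f (dem n i g)) = rmul f (rmul (xdiff i) (dem n i g))"
    by (rule rmul_left_commute_xdiff[OF i f Rn_dem[OF g], symmetric])
  also have "\<dots> = rmul f g - rmul (sact i f) (sact i g)"
    using rmul_diff_right[OF f g Rn_sact[OF i g]] fixed by (simp add: xdiff_mul_dem[OF g])
  also have "\<dots> = rmul f g - sact i (rmul f g)" by (simp add: sact_rmul[OF i f g])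
  finally show "rmul (xdiff i) (rmul f (dem n i g)) = rmul f g - sact i (rmul f g)" .
qed

lemma dem_ptwist:
  assumes c: "c \<in> Rn n"
  shows "dem n i (ptwist p c) = ptwist p (dem n i c)"
proof (rule dem_unique[OF i Rn_ptwist[OF c] Rn_ptwist[OF Rn_dem[OF c]]])
  have "rmul (xdiff i) (ptwist p (dem n i c)) = ptwist p (rmul (xdiff i) (dem n i c))"
    using ptwist_rmul[OF Rn_xdiff[OF i] Rn_dem[OF c], of p] ptwist_xdiff[OF i] by simp
  also have "\<dots> = ptwist p c - sact i (ptwist p c)"
    using xdiff_mul_dem[OF c] sact_ptwist[OF i c] zlinear_diff[OF zlinear_ptwist c Rn_sact[OF i c]]
    by simp
  finally show "rmul (xdiff i) (ptwist p (dem n i c)) = ptwist p c - sact i (ptwist p c)" .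
qed

end

definition additive_op :: "nat \<Rightarrow> (elt \<Rightarrow> elt) \<Rightarrow> bool" where
  "additive_op n T \<longleftrightarrow> (\<forall>g. g \<notin> Rn n \<longrightarrow> T g = 0) \<and> (\<forall>g\<in>Rn n. T g \<in> Rn n) \<and>
     (\<forall>g\<in>Rn n. \<forall>h\<in>Rn n. T (g + h) = T g + T h)"

lemma additive_op_zero: "additive_op n T \<Longrightarrow> T 0 = 0"
  using Rn_zero unfolding additive_op_def by (metis add_0_left add_left_imp_eq add.right_neutral)

lemma zero_fun_eta: "(\<lambda>a. 0) = (0::elt)" by (simp add: zero_fun_def)
lemma plus_fun_eta: "(\<lambda>a. f a + g a) = (f + g :: elt)" by (simp add: plus_fun_def)

lemma An_additive_op: "T \<in> An n \<Longrightarrow> additive_op n T"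
proof (induction rule: An.induct)
  case (mul f)
  then show ?case
    by (simp add: additive_op_def mulop_def restr_def rzero_eq Rn_rmul rmul_add_right Rn_add)
next
  case (dem i)
  then show ?case by (simp add: additive_op_def demop_def restr_def rzero_eq Rn_dem dem_add Rn_add)
next
  case (add T U)
  then show ?case
    using Rn_add by (simp add: additive_op_def opadd_def radd_eq algebra_simps zero_fun_eta plus_fun_eta)
next
  case (comp T U)
  then show ?case using additive_op_zero[of n T] by (simp add: additive_op_def)
qed

lemma An_outside: "T \<in> An n \<Longrightarrow> g \<notin> Rn n \<Longrightarrow> T g = 0"
  using An_additive_op unfolding additive_op_def by blast

lemma Rn_An_apply: "T \<in> An n \<Longrightarrow> g \<in> Rn n \<Longrightarrow> T g \<in> Rn n"
  using An_additive_op unfolding additive_op_def by blast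

lemma An_add: "T \<in> An n \<Longrightarrow> g \<in> Rn n \<Longrightarrow> h \<in> Rn n \<Longrightarrow> T (g + h) = T g + T h"
  using An_additive_op unfolding additive_op_def by blast

lemma An_zero: "T \<in> An n \<Longrightarrow> T 0 = 0"
  using An_additive_op additive_op_zero by blast

lemma An_uminus: "T \<in> An n \<Longrightarrow> g \<in> Rn n \<Longrightarrow> T (- g) = - T g"
  using An_add[of T n g "- g"] An_zero[of T n] Rn_uminus[of g n]
  by (simp add: eq_neg_iff_add_eq_0 add.commute)

lemma An_zscale_sign: "T \<in> An n \<Longrightarrow> g \<in> Rn n \<Longrightarrow> t = 1 \<or> t = -1 \<Longrightarrow> T (zscale t g) = zscale t (T g)"
  using An_uminus[of T n g] by (auto simp: zscale_one zscale_minus_one)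

lemma An_sum: "T \<in> An n \<Longrightarrow> (\<And>a. a \<in> A \<Longrightarrow> G a \<in> Rn n) \<Longrightarrow> T (sum G A) = (\<Sum>a\<in>A. T (G a))"
  by (induction A rule: infinite_finite_induct) (auto simp: An_zero An_add Rn_sum)

lemma An_expansion: "T \<in> An n \<Longrightarrow> g \<in> Rn n \<Longrightarrow> T g = (\<Sum>k\<in>supp g. T (zscale (g k) (mono k)))"
  by (subst monomial_expansion, assumption) (simp add: An_sum Rn_zscale_mono)

lemma mulop_apply: "g \<in> Rn n \<Longrightarrow> mulop n f g = rmul f g" by (simp add: mulop_def restr_def)
lemma mulop_outside: "g \<notin> Rn n \<Longrightarrow> mulop n f g = 0" by (simp add: mulop_def restr_def rzero_eq)
lemma demop_apply: "g \<in> Rn n \<Longrightarrow> demop n i g = dem n i g" by (simp add: demop_def restr_def)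

lemma hom_op_mulop: "homR n e f \<Longrightarrow> hom_op n e (mulop n f)"
  unfolding hom_op_def using homR_rmul[of n e f] by (simp add: mulop_apply homR_Rn)

lemma hom_op_demop: "1 \<le> i \<Longrightarrow> i < n \<Longrightarrow> hom_op n (-2, 0) (demop n i)"
  unfolding hom_op_def using homR_dem[of i n] by (simp add: demop_apply homR_Rn)

lemma neg_one_power_par: "(-1::int) ^ (par d) = (if even (snd d div 2) then 1 else -1)"
proof -
  have "snd d div 2 mod 2 = (if even (snd d div 2) then 0 else 1)" by presburger
  then show ?thesis by (simp add: par_def)
qed

lemma neg_one_power_par_add:
  assumes "snd E = 2 * int b" "snd e + snd E = 2 * int c"
  shows "(-1::int) ^ (par (fst e + fst E, snd e + snd E)) * (-1) ^ (par E) = (-1) ^ (par e)"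
proof -
  have "(snd e + snd E) div 2 = int c" "snd E div 2 = int b" "snd e div 2 = int c - int b"
    using assms by simp_all
  then show ?thesis unfolding neg_one_power_par by auto
qed

lemma neg_one_power_square: "((-1::int) ^ k) * ((-1) ^ k) = 1"
  by (simp add: power_add[symmetric] mult_2[symmetric] power_mult)

lemma An_ptwist_conj_hom:
  assumes a: "a \<in> An n" and ha: "hom_op n e a" and y: "homR n E y" and E: "snd E = 2 * int b"
  shows "ptwist p (a (ptwist p y)) = zscale ((-1) ^ (p * par e)) (a y)"
proof -
  let ?t = "(-1::int) ^ (p * par E)" and ?eE = "(fst e + fst E, snd e + snd E)"
  have ay: "homR n ?eE (a y)" using ha y by (simp add: hom_op_def)
  have "ptwist p (a (ptwist p y)) = zscale ?t (zscale ((-1) ^ (p * par ?eE)) (a y))"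
    using An_zscale_sign[OF a homR_Rn[OF y], of ?t] homR_ptwist[OF y] homR_ptwist[OF ay, of p]
    by (cases "even (p * par E)") (simp_all add: ptwist_zscale)
  also have "\<dots> = zscale ((-1) ^ (p * par e)) (a y)"
  proof (cases "a y = 0")
    case False
    then obtain m where m: "m \<in> supp (a y)" by (auto simp: supp_def fun_eq_iff)
    then have "snd e + snd E = 2 * int (card (snd m))"
      using homR_supp[OF ay m] by (simp add: mdeg_def prod_eq_iff)
    then have sign: "(-1::int) ^ (par ?eE) * (-1) ^ (par E) = (-1) ^ (par e)"
      by (rule neg_one_power_par_add[OF E])
    have "?t * (-1) ^ (p * par ?eE) = ((-1) ^ (par ?eE) * (-1) ^ (par E)) ^ p"
      by (simp add: power_mult[symmetric] mult.commute power_mult_distrib)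
    then show ?thesis unfolding sign by (simp add: zscale_zscale power_mult[symmetric] mult.commute)
  qed (simp add: zscale_zero_right)
  finally show ?thesis .
qed

lemma An_ptwist_conj:
  assumes a: "a \<in> An n" and ha: "hom_op n e a" and g: "g \<in> Rn n"
  shows "ptwist p (a (ptwist p g)) = zscale ((-1) ^ (p * par e)) (a g)"
proof -
  let ?y = "\<lambda>k. zscale (g k) (mono k)"
  have yR: "\<And>k. k \<in> supp g \<Longrightarrow> ?y k \<in> Rn n" by (rule Rn_zscale_mono[OF g])
  have "ptwist p (a (ptwist p g)) = ptwist p (a (\<Sum>k\<in>supp g. ptwist p (?y k)))"
    using zlinear_expansion[OF zlinear_ptwist g, of p] by (simp add: ptwist_zscale)
  also have "\<dots> = (\<Sum>k\<in>supp g. ptwist p (a (ptwist p (?y k))))"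
    using An_sum[OF a, of "supp g" "\<lambda>k. ptwist p (?y k)"]
      zlinear_sum[OF zlinear_ptwist, of "supp g" "\<lambda>k. a (ptwist p (?y k))" n p]
      yR Rn_ptwist Rn_An_apply[OF a] by simp
  also have "\<dots> = (\<Sum>k\<in>supp g. zscale ((-1) ^ (p * par e)) (a (?y k)))"
  proof (rule sum.cong[OF refl])
    fix k assume "k \<in> supp g"
    moreover have "snd (mdeg k) = 2 * int (card (snd k))" by (simp add: mdeg_def)
    ultimately show "ptwist p (a (ptwist p (?y k))) = zscale ((-1) ^ (p * par e)) (a (?y k))"
      by (rule An_ptwist_conj_hom[OF a ha homR_zscale_mono[OF g]])
  qed
  also have "\<dots> = zscale ((-1) ^ (p * par e)) (a g)"
    using An_expansion[OF a g] by (simp add: zscale_sum)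
  finally show ?thesis .
qed

section \<open>The supercenter\<close>

lemma An_mul_invariant:
  assumes F: "F \<in> Rn n" and fixed: "\<And>i. 1 \<le> i \<Longrightarrow> i < n \<Longrightarrow> sact i F = F"
    and par: "\<And>m. m \<in> supp F \<Longrightarrow> (-1) ^ card (snd m) = ((-1) ^ p :: int)"
    and a: "a \<in> An n" and g: "g \<in> Rn n"
  shows "a (rmul F g) = rmul F (ptwist p (a (ptwist p g)))"
  using a g
proof (induction arbitrary: g rule: An.induct)
  case (mul h)
  have "rmul F (ptwist p (rmul h (ptwist p g))) = rmul F (rmul (ptwist p h) g)"
    using ptwist_rmul[OF mul(1) Rn_ptwist[OF mul(2)]] by (simp add: ptwist_ptwist)
  also have "\<dots> = rmul (rmul h F) g"
    using rmul_assoc[OF F Rn_ptwist[OF mul(1)] mul(2)] rmul_supercommute[OF F par mul(1)] by simp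
  also have "\<dots> = rmul h (rmul F g)" using rmul_assoc[OF mul(1) F mul(2)] .
  finally show ?case using mul(2) by (simp add: mulop_apply Rn_rmul[OF F] Rn_ptwist)
next
  case (dem i)
  then show ?case
    using dem_mul_invariant[OF dem(1,2) F fixed[OF dem(1,2)] dem(3)] dem_ptwist[OF dem(1,2) dem(3), of p]
    by (simp add: demop_apply Rn_rmul[OF F] Rn_ptwist ptwist_ptwist)
next
  case (add T U)
  have R: "T (ptwist p g) \<in> Rn n" "U (ptwist p g) \<in> Rn n"
    using Rn_An_apply[OF add.hyps(1)] Rn_An_apply[OF add.hyps(2)] Rn_ptwist[OF add.prems] by auto
  have "opadd T U (rmul F g) = rmul F (ptwist p (T (ptwist p g))) + rmul F (ptwist p (U (ptwist p g)))"
    using add.IH add.prems by (simp add: opadd_def radd_eq)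
  also have "\<dots> = rmul F (ptwist p (opadd T U (ptwist p g)))"
    using rmul_add_right[OF F Rn_ptwist[OF R(1)] Rn_ptwist[OF R(2)]]
    by (simp add: opadd_def radd_eq ptwist_add)
  finally show ?case .
next
  case (comp T U)
  have "ptwist p (U (ptwist p g)) \<in> Rn n"
    using Rn_An_apply[OF comp.hyps(2)] Rn_ptwist[OF comp.prems] Rn_ptwist by blast
  then show ?case using comp.IH comp.prems by (simp add: ptwist_ptwist)
qed

lemma mulop_invariant_HZ:
  assumes F: "F \<in> Rinv n" and D: "homR n D F"
  shows "mulop n F \<in> HZ n"
proof -
  have FR: "F \<in> Rn n" and fixed: "\<And>i. 1 \<le> i \<Longrightarrow> i < n \<Longrightarrow> sact i F = F"
    using F by (simp_all add: Rinv_def)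
  have "mulop n F \<circ> a = opscale ((-1) ^ (par D * par e)) (a \<circ> mulop n F)"
    if a: "a \<in> An n" and ha: "hom_op n e a" for a e
  proof (rule ext)
    fix g
    let ?s = "(-1::int) ^ (par D * par e)"
    show "(mulop n F \<circ> a) g = opscale ?s (a \<circ> mulop n F) g"
    proof (cases "g \<in> Rn n")
      case True
      have "opscale ?s (a \<circ> mulop n F) g = zscale ?s (rmul F (ptwist (par D) (a (ptwist (par D) g))))"
        using True An_mul_invariant[OF FR fixed homR_parity[OF D] a True]
        by (simp add: opscale_def zscale_def mulop_apply)
      also have "\<dots> = rmul F (a g)"
        using An_ptwist_conj[OF a ha True] rmul_zscale_right[OF FR Rn_An_apply[OF a True]]
        by (simp add: zscale_zscale neg_one_power_square zscale_one)
      finally show ?thesis using Rn_An_apply[OF a True] by (simp add: mulop_apply)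
    next
      case False
      then have "(mulop n F \<circ> a) g = 0"
        using An_outside[OF a False] by (simp add: mulop_apply Rn_zero rmul_zero_right)
      moreover have "opscale ?s (a \<circ> mulop n F) g = 0"
        using False An_zero[OF a] by (simp add: opscale_def mulop_outside zero_fun_eta)
      ultimately show ?thesis by simp
    qed
  qed
  then show ?thesis unfolding HZ_def using An.mul[OF FR] hom_op_mulop[OF D] by blast
qed

lemma HZ_eq_mulop_value:
  assumes x: "x \<in> An n" "hom_op n d x"
    and scomm: "\<And>a e. a \<in> An n \<Longrightarrow> hom_op n e a \<Longrightarrow> x \<circ> a = opscale ((-1) ^ (par d * par e)) (a \<circ> x)"
  shows "x = mulop n (x rone)"
proof -
  let ?h = "x rone"
  have hh: "homR n d ?h" using x(2) homR_rone unfolding hom_op_def by fastforce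
  have hR: "?h \<in> Rn n" using hh by (rule homR_Rn)
  have on_hom: "x g = rmul ?h g" if g: "homR n e g" for g e
  proof -
    let ?s = "(-1::int) ^ (par d * par e)"
    have gR: "g \<in> Rn n" using g by (rule homR_Rn)
    have "x g = zscale ?s (rmul g ?h)"
      using fun_cong[OF scomm[OF An.mul[OF gR] hom_op_mulop[OF g]], of rone]
      by (simp add: mulop_apply Rn_rone rmul_one_right[OF gR] opscale_def zscale_def hR)
    also have "rmul g ?h = zscale ?s (rmul ?h g)"
      using rmul_supercommute[OF hR homR_parity[OF hh] gR] homR_ptwist[OF g, of "par d"]
        rmul_zscale_right[OF hR gR] by (simp add: mult.commute)
    finally show ?thesis by (simp add: zscale_zscale neg_one_power_square zscale_one)
  qed
  have "x g = rmul ?h g" if g: "g \<in> Rn n" for g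
  proof -
    have "x g = (\<Sum>k\<in>supp g. rmul ?h (zscale (g k) (mono k)))"
      using An_expansion[OF x(1) g] on_hom[OF homR_zscale_mono[OF g]] by simp
    also have "\<dots> = rmul ?h g"
      by (subst (2) monomial_expansion[OF g]) (simp add: rmul_sum_right[OF hR] Rn_zscale_mono[OF g])
    finally show ?thesis .
  qed
  then show ?thesis
    by (intro ext) (metis An_outside[OF x(1)] mulop_apply mulop_outside)
qed

lemma HZ_value_invariant:
  assumes x: "x \<in> An n" "hom_op n d x"
    and scomm: "\<And>a e. a \<in> An n \<Longrightarrow> hom_op n e a \<Longrightarrow> x \<circ> a = opscale ((-1) ^ (par d * par e)) (a \<circ> x)"
    and i: "1 \<le> i" "i < n"
  shows "sact i (x rone) = x rone"
proof -
  have hR: "x rone \<in> Rn n" using Rn_An_apply[OF x(1) Rn_rone] .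
  \<comment> \<open>d_i has even degree (-2, 0), so x commutes with it, and d_i 1 = 0\<close>
  have "x (dem n i rone) = dem n i (x rone)"
    using fun_cong[OF scomm[OF An.dem[OF i] hom_op_demop[OF i]], of rone]
    by (simp add: par_def opscale_def demop_apply Rn_rone hR)
  then have "dem n i (x rone) = 0" using dem_rone[OF i] An_zero[OF x(1)] by simp
  then show ?thesis using xdiff_mul_dem[OF i hR] by (simp add: rmul_zero_right)
qed

lemma HZ_mulop: "x \<in> HZ n \<Longrightarrow> \<exists>h\<in>Rinv n. x = mulop n h"
  unfolding HZ_def Rinv_def
  using HZ_eq_mulop_value HZ_value_invariant Rn_An_apply[OF _ Rn_rone] by blast

definition hom_part :: "int \<times> int \<Rightarrow> elt \<Rightarrow> elt" where
  "hom_part D c = (\<lambda>m. if mdeg m = D then c m else 0)"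

lemma homR_hom_part: "c \<in> Rn n \<Longrightarrow> homR n D (hom_part D c)"
  unfolding homR_def Rn_def
  by (auto intro: finite_subset[of _ "supp c"] simp: supp_def hom_part_def split: if_splits)

lemma Rn_hom_part: "c \<in> Rn n \<Longrightarrow> hom_part D c \<in> Rn n" using homR_hom_part homR_Rn by blast

lemma sum_hom_parts: "c \<in> Rn n \<Longrightarrow> c = (\<Sum>D\<in>mdeg ` supp c. hom_part D c)"
proof (rule ext)
  fix m assume c: "c \<in> Rn n"
  have "(\<Sum>D\<in>mdeg ` supp c. hom_part D c) m = (if mdeg m \<in> mdeg ` supp c then c m else 0)"
    using c by (simp add: sum_apply hom_part_def Rn_finite_supp)
  also have "\<dots> = c m" by (auto simp: supp_def)
  finally show "c m = (\<Sum>D\<in>mdeg ` supp c. hom_part D c) m" by simp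
qed

lemma hom_part_homR: "homR n E y \<Longrightarrow> hom_part D y = (if E = D then y else 0)"
  by (rule ext) (auto simp: hom_part_def supp_def dest: homR_supp)

lemma zlinear_hom_part: "zlinear n (hom_part D)"
  by (simp add: zlinear_def hom_part_def zscale_def fun_eq_iff)

lemma sact_hom_part:
  assumes i: "1 \<le> i" "i < n" and c: "c \<in> Rn n"
  shows "sact i (hom_part D c) = hom_part D (sact i c)"
proof (rule zlinear_eqI[of n "\<lambda>c. sact i (hom_part D c)" "\<lambda>c. hom_part D (sact i c)", OF _ _ _ c])
  show "zlinear n (\<lambda>c. sact i (hom_part D c))"
    by (rule zlinear_comp[OF zlinear_sact zlinear_hom_part Rn_hom_part])
  show "zlinear n (\<lambda>c. hom_part D (sact i c))"
    by (rule zlinear_comp[OF zlinear_hom_part zlinear_sact Rn_sact[OF i]])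
  fix k assume v: "valid_mon n k"
  show "sact i (hom_part D (mono k)) = hom_part D (sact i (mono k))"
    using hom_part_homR[OF homR_mono[OF v], of D] hom_part_homR[OF homR_simg[OF i v], of D]
    by (simp add: sact_mono zlinear_zero[OF zlinear_sact])
qed

lemma Rinv_zero: "0 \<in> Rinv n" by (simp add: Rinv_def Rn_zero zlinear_zero[OF zlinear_sact])

lemma Rinv_add: "f \<in> Rinv n \<Longrightarrow> g \<in> Rinv n \<Longrightarrow> f + g \<in> Rinv n"
  by (auto simp: Rinv_def Rn_add zlinear_add[OF zlinear_sact])

lemma Rinv_hom_part: "f \<in> Rinv n \<Longrightarrow> hom_part D f \<in> Rinv n"
  by (auto simp: Rinv_def Rn_hom_part sact_hom_part)

lemma mulop_zero: "mulop n 0 = zeroop"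
  by (simp add: fun_eq_iff mulop_def restr_def zeroop_def rmul_zero_left rzero_eq)

lemma mulop_add: "f \<in> Rn n \<Longrightarrow> f' \<in> Rn n \<Longrightarrow> mulop n (f + f') = opadd (mulop n f) (mulop n f')"
  by (rule ext) (simp add: mulop_def restr_def opadd_def radd_eq rmul_add_left rzero_eq)

lemma mulop_sum_Zs:
  "finite A \<Longrightarrow> (\<And>D. D \<in> A \<Longrightarrow> G D \<in> Rinv n \<and> homR n D (G D)) \<Longrightarrow> mulop n (sum G A) \<in> Zs n"
proof (induction A rule: finite_induct)
  case empty then show ?case by (simp add: mulop_zero Zs.zero zero_fun_eta)
next
  case (insert D A)
  then have G: "G D \<in> Rinv n" "homR n D (G D)" and "G D \<in> Rn n" "sum G A \<in> Rn n"
    by (auto intro!: Rn_sum simp: Rinv_def)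
  then show ?case
    unfolding sum.insert[OF insert.hyps] mulop_add[OF \<open>G D \<in> Rn n\<close> \<open>sum G A \<in> Rn n\<close>]
    using insert by (intro Zs.add mulop_invariant_HZ[OF G]) auto
qed

lemma mulop_Zs:
  assumes f: "f \<in> Rinv n"
  shows "mulop n f \<in> Zs n"
proof -
  have fR: "f \<in> Rn n" using f by (simp add: Rinv_def)
  have "mulop n (\<Sum>D\<in>mdeg ` supp f. hom_part D f) \<in> Zs n"
    using f fR by (intro mulop_sum_Zs) (auto simp: Rn_finite_supp Rinv_hom_part homR_hom_part)
  then show ?thesis using sum_hom_parts[OF fR] by simp
qed

lemma Zs_mulop: "x \<in> Zs n \<Longrightarrow> \<exists>h\<in>Rinv n. x = mulop n h"
proof (induction rule: Zs.induct)
  case zero then show ?case using Rinv_zero mulop_zero by metis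
next
  case (add x y)
  obtain h1 h2 where h: "h1 \<in> Rinv n" "x = mulop n h1" "h2 \<in> Rinv n" "y = mulop n h2"
    using HZ_mulop[OF add.hyps(1)] add.IH by blast
  then have "opadd x y = mulop n (h1 + h2)" using mulop_add[of h1 n h2] by (simp add: Rinv_def)
  then show ?case using Rinv_add[OF h(1,3)] by blast
qed

lemma mulop_image_Rinv: "mulop n ` Rinv n = Zs n"
  using mulop_Zs Zs_mulop by blast

lemma inj_on_mulop: "inj_on (mulop n) (Rinv n)"
proof (rule inj_onI)
  fix f g assume "f \<in> Rinv n" "g \<in> Rinv n" and e: "mulop n f = mulop n g"
  then have "f \<in> Rn n" "g \<in> Rn n" by (simp_all add: Rinv_def)
  then have "f = mulop n f rone" "g = mulop n g rone"
    by (simp_all add: mulop_apply Rn_rone rmul_one_right)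
  with e show "f = g" by simp
qed

lemma mulop_rmul: "f \<in> Rn n \<Longrightarrow> g \<in> Rn n \<Longrightarrow> mulop n (rmul f g) = mulop n f \<circ> mulop n g"
  by (rule ext) (simp add: mulop_def restr_def Rn_rmul rmul_assoc rmul_zero_right rzero_eq)

lemma mulop_rone: "mulop n rone = idop n"
  by (simp add: fun_eq_iff mulop_def idop_def restr_def rmul_one_left)

lemma hom_op_mulop_iff: "f \<in> Rn n \<Longrightarrow> hom_op n d (mulop n f) \<longleftrightarrow> homR n d f"
  using hom_op_mulop homR_rone
  by (fastforce simp: hom_op_def mulop_apply Rn_rone rmul_one_right)

theorem proposition2p7:
  fixes n :: nat
  shows "\<exists>\<phi>. bij_betw \<phi> (Rinv n) (Zs n)
    \<and> (\<forall>f\<in>Rinv n. \<forall>g\<in>Rinv n.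
          \<phi> (radd f g) = opadd (\<phi> f) (\<phi> g) \<and> \<phi> (rmul f g) = \<phi> f \<circ> \<phi> g)
    \<and> \<phi> rone = idop n
    \<and> (\<forall>f\<in>Rinv n. \<forall>d. homR n d f \<longleftrightarrow> hom_op n d (\<phi> f))"
proof (intro exI[of _ "mulop n"] conjI ballI allI)
  show "bij_betw (mulop n) (Rinv n) (Zs n)"
    by (simp add: bij_betw_def inj_on_mulop mulop_image_Rinv)
  show "mulop n rone = idop n" by (rule mulop_rone)
  fix f assume f: "f \<in> Rinv n"
  then show "homR n d f \<longleftrightarrow> hom_op n d (mulop n f)" for d
    by (simp add: Rinv_def hom_op_mulop_iff)
  fix g assume "g \<in> Rinv n"
  with f show "mulop n (radd f g) = opadd (mulop n f) (mulop n g)"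
    and "mulop n (rmul f g) = mulop n f \<circ> mulop n g"
    by (simp_all add: Rinv_def radd_eq mulop_add mulop_rmul)
qed

end
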